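(* Assume that for all $i,j\in I$ the map $u\mapsto\lambda_{ij}(u)$ is continuous on $U$, and that $f\colon I\times U\to\mathbb R$ is continuous. Fix $T>0$ and $w\in\mathrm C(\Delta_e)$, and for $\nu\in\Delta_e$, $\alpha\in A$ set $$\mathcal J_{T,w}(\nu,\alpha)=\int_0^Te^{-\beta t}L\bigl(\phi^\alpha_\nu(t),\chi^\alpha_\nu(t),\alpha(t),w\bigr)\,dt.$$ Then there exist constants $C,K_1,K_2>0$ and a modulus of continuity $\eta$ (a continuous, nondecreasing, subadditive function $\eta\colon[0,\infty)\to[0,\infty)$ with $\eta(t)\to0$ as $t\downarrow0$) such that for all $\alpha\in A$ and all $\nu,\rho\in\Delta_e$, $$\bigl|\mathcal J_{T,w}(\nu,\alpha)-\mathcal J_{T,w}(\rho,\alpha)\bigr|\le K_1|\nu-\rho|+K_2\,\eta(C|\nu-\rho|).$$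
   Context: $I$, $O$ finite sets; $h\colon I\to O$ surjective and non-constant. $U$ compact metric space. For $u\in U$, $\Lambda(u)=(\lambda_{ij}(u))$ real with $\lambda_{ij}(u)\ge0$ for $i\ne j$ and zero row sums. $\mathbf f(u)=(f(i,u))_{i\in I}$ column vector; $\beta>0$. Measures on $I$ are row vectors in $\mathbb R^{|I|}$ with the Euclidean norm $|\cdot|$; $\Delta_a$ ($a\in O$) is the set of probability measures supported in $h^{-1}(a)$; $\Delta_e=\bigcup_a\Delta_a$; $\mathrm C(\Delta_e)$ the continuous real functions on $\Delta_e$; $\mathbb 1_{h^{-1}(a)}$ the column indicator of $h^{-1}(a)$. $F$: for $\nu\in\Delta_a$, $F_j(\nu,u)=[\nu\Lambda(u)]_j-(\nu\Lambda(u)\mathbb 1_{h^{-1}(a)})\nu_j$ for $j\in h^{-1}(a)$, $0$ otherwise. $H_b[\mu]$ ($b\in O$, $\mu\in\mathbb R^{|I|}$): $0$ off $h^{-1}(b)$, $\mu(i)/(\mu\mathbb 1_{h^{-1}(b)})$ on $h^{-1}(b)$ if $\mu\mathbb 1_{h^{-1}(b)}\ne0$, a fixed $\nu_b\in\Delta_b$ otherwise. For $\rho\in\Delta_a$: $r(\rho,u)=-\rho\Lambda(u)\mathbb 1_{h^{-1}(a)}$; $R(\rho,u;D)=\sum_b\mathbb 1_D(H_b[\rho\Lambda(u)])q(\rho,u,b)$, $q(\rho,u,b)=\frac{\rho\Lambda(u)\mathbb 1_{h^{-1}(b)}}{-\rho\Lambda(u)\mathbb 1_{h^{-1}(a)}}\mathbb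 1_{b\ne a}$ if the denominator is nonzero, else $q_a(b)$ ($q_a$ a fixed probability on $O\setminus\{a\}$). $L(\rho,s,u,w)=s[\rho\mathbf f(u)+r(\rho,u)\int_{\Delta_e}w(p)R(\rho,u;dp)]$. $A$ is the set of measurable maps $\alpha\colon[0,\infty)\to U$. For $\rho\in\Delta_a$, $\phi^\alpha_\rho$ is the solution of $z'(t)=F(z(t),\alpha(t))$, $z(0)=\rho$ (it stays in $\Delta_a$), and $\chi^\alpha_\rho(t)=\exp\{-\int_0^tr(\phi^\alpha_\rho(s),\alpha(s))ds\}$. *)

theory Defs
  imports "HOL-Analysis.Analysis"
begin

text \<open>Measures on I are vectors in real^'i (Euclidean norm). Lambda(u) is given by
  lam u i j, the cost vector by f i u, the observation map by h.\<close>

definition Delta :: "('i::finite \<Rightarrow> 'o) \<Rightarrow> 'o \<Rightarrow> (real^'i) set" where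
  "Delta h a = {\<nu>. (\<forall>i. 0 \<le> \<nu>$i) \<and> (\<Sum>i\<in>UNIV. \<nu>$i) = 1 \<and> (\<forall>i. h i \<noteq> a \<longrightarrow> \<nu>$i = 0)}"

definition Delta_e :: "('i::finite \<Rightarrow> 'o) \<Rightarrow> (real^'i) set" where
  "Delta_e h = (\<Union>a. Delta h a)"

definition muLam1 :: "('u \<Rightarrow> 'i::finite \<Rightarrow> 'i \<Rightarrow> real) \<Rightarrow> ('i \<Rightarrow> 'o) \<Rightarrow> real^'i \<Rightarrow> 'u \<Rightarrow> 'o \<Rightarrow> real" where
  "muLam1 lam h \<mu> u b = (\<Sum>i\<in>UNIV. \<Sum>j\<in>{j. h j = b}. \<mu>$i * lam u i j)"

definition muLam :: "('u \<Rightarrow> 'i::finite \<Rightarrow> 'i \<Rightarrow> real) \<Rightarrow> real^'i \<Rightarrow> 'u \<Rightarrow> real^'i" where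
  "muLam lam \<mu> u = (\<chi> j. \<Sum>i\<in>UNIV. \<mu>$i * lam u i j)"

definition Fvf :: "('u \<Rightarrow> 'i::finite \<Rightarrow> 'i \<Rightarrow> real) \<Rightarrow> ('i \<Rightarrow> 'o) \<Rightarrow> 'o \<Rightarrow> real^'i \<Rightarrow> 'u \<Rightarrow> real^'i" where
  "Fvf lam h a \<nu> u = (\<chi> j. if h j = a then (muLam lam \<nu> u)$j - muLam1 lam h \<nu> u a * \<nu>$j else 0)"

text \<open>H_b[mu], with the fixed choice nu0 b in Delta_b\<close>
definition Hb :: "('i::finite \<Rightarrow> 'o) \<Rightarrow> ('o \<Rightarrow> real^'i) \<Rightarrow> 'o \<Rightarrow> real^'i \<Rightarrow> real^'i" where
  "Hb h nu0 b \<mu> = (if (\<Sum>i\<in>{i. h i = b}. \<mu>$i) \<noteq> 0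
      then (\<chi> i. if h i = b then \<mu>$i / (\<Sum>k\<in>{k. h k = b}. \<mu>$k) else 0)
      else nu0 b)"

definition rr :: "('u \<Rightarrow> 'i::finite \<Rightarrow> 'i \<Rightarrow> real) \<Rightarrow> ('i \<Rightarrow> 'o) \<Rightarrow> 'o \<Rightarrow> real^'i \<Rightarrow> 'u \<Rightarrow> real" where
  "rr lam h a \<rho> u = - muLam1 lam h \<rho> u a"

text \<open>q(rho,u,b) for rho in Delta_a, with fixed probabilities qd a on O minus {a}\<close>
definition qq :: "('u \<Rightarrow> 'i::finite \<Rightarrow> 'i \<Rightarrow> real) \<Rightarrow> ('i \<Rightarrow> 'o) \<Rightarrow> ('o \<Rightarrow> 'o \<Rightarrow> real)
    \<Rightarrow> 'o \<Rightarrow> real^'i \<Rightarrow> 'u \<Rightarrow> 'o \<Rightarrow> real" where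
  "qq lam h qd a \<rho> u b = (if - muLam1 lam h \<rho> u a \<noteq> 0
      then muLam1 lam h \<rho> u b / (- muLam1 lam h \<rho> u a) * (if b \<noteq> a then 1 else 0)
      else qd a b)"

text \<open>integral of w against R(rho,u;.), which is the finite sum of point masses
  at H_b[rho Lambda(u)] with weights q(rho,u,b)\<close>
definition intR :: "('u \<Rightarrow> 'i::finite \<Rightarrow> 'i \<Rightarrow> real) \<Rightarrow> ('i \<Rightarrow> 'o::finite) \<Rightarrow> ('o \<Rightarrow> real^'i)
    \<Rightarrow> ('o \<Rightarrow> 'o \<Rightarrow> real) \<Rightarrow> 'o \<Rightarrow> real^'i \<Rightarrow> 'u \<Rightarrow> (real^'i \<Rightarrow> real) \<Rightarrow> real" where
  "intR lam h nu0 qd a \<rho> u w =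
     (\<Sum>b\<in>UNIV. w (Hb h nu0 b (muLam lam \<rho> u)) * qq lam h qd a \<rho> u b)"

definition LL :: "('u \<Rightarrow> 'i::finite \<Rightarrow> 'i \<Rightarrow> real) \<Rightarrow> ('i \<Rightarrow> 'u \<Rightarrow> real) \<Rightarrow> ('i \<Rightarrow> 'o::finite)
    \<Rightarrow> ('o \<Rightarrow> real^'i) \<Rightarrow> ('o \<Rightarrow> 'o \<Rightarrow> real) \<Rightarrow> 'o
    \<Rightarrow> real^'i \<Rightarrow> real \<Rightarrow> 'u \<Rightarrow> (real^'i \<Rightarrow> real) \<Rightarrow> real" where
  "LL lam f h nu0 qd a \<rho> s u w =
     s * ((\<Sum>i\<in>UNIV. \<rho>$i * f i u) + rr lam h a \<rho> u * intR lam h nu0 qd a \<rho> u w)"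

text \<open>Admissible controls: measurable maps [0,oo) -> U (values at negative times irrelevant).\<close>
definition Adm :: "'u::metric_space set \<Rightarrow> (real \<Rightarrow> 'u) set" where
  "Adm U = {\<alpha>. (\<forall>t\<ge>0. \<alpha> t \<in> U) \<and> \<alpha> \<in> borel_measurable (restrict_space lborel {0..})}"

text \<open>The solution of z' = F(z, alpha), z(0) = rho, in integral (Caratheodory) form on [0,oo);
  by convention it is extended by rho to negative times.\<close>
definition phi :: "('u \<Rightarrow> 'i::finite \<Rightarrow> 'i \<Rightarrow> real) \<Rightarrow> ('i \<Rightarrow> 'o) \<Rightarrow> 'o \<Rightarrow> (real \<Rightarrow> 'u)
    \<Rightarrow> real^'i \<Rightarrow> real \<Rightarrow> real^'i" where
  "phi lam h a \<alpha> \<rho> = (THE z. (\<forall>t<0. z t = \<rho>) \<and>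
      (\<forall>t\<ge>0. ((\<lambda>s. Fvf lam h a (z s) (\<alpha> s)) has_integral (z t - \<rho>)) {0..t}))"

definition chi :: "('u \<Rightarrow> 'i::finite \<Rightarrow> 'i \<Rightarrow> real) \<Rightarrow> ('i \<Rightarrow> 'o) \<Rightarrow> 'o \<Rightarrow> (real \<Rightarrow> 'u)
    \<Rightarrow> real^'i \<Rightarrow> real \<Rightarrow> real" where
  "chi lam h a \<alpha> \<rho> t = exp (- integral {0..t} (\<lambda>s. rr lam h a (phi lam h a \<alpha> \<rho> s) (\<alpha> s)))"

definition JJ :: "('u \<Rightarrow> 'i::finite \<Rightarrow> 'i \<Rightarrow> real) \<Rightarrow> ('i \<Rightarrow> 'u \<Rightarrow> real) \<Rightarrow> ('i \<Rightarrow> 'o::finite)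
    \<Rightarrow> ('o \<Rightarrow> real^'i) \<Rightarrow> ('o \<Rightarrow> 'o \<Rightarrow> real) \<Rightarrow> real \<Rightarrow> real \<Rightarrow> (real^'i \<Rightarrow> real)
    \<Rightarrow> 'o \<Rightarrow> real^'i \<Rightarrow> (real \<Rightarrow> 'u) \<Rightarrow> real" where
  "JJ lam f h nu0 qd \<beta> T w a \<nu> \<alpha> = integral {0..T} (\<lambda>t. exp (- \<beta> * t) *
      LL lam f h nu0 qd a (phi lam h a \<alpha> \<nu> t) (chi lam h a \<alpha> \<nu> t) (\<alpha> t) w)"

definition modulus_of_continuity :: "(real \<Rightarrow> real) \<Rightarrow> bool" where
  "modulus_of_continuity \<eta> \<longleftrightarrow> continuous_on {0..} \<eta> \<and> mono_on {0..} \<eta> \<and>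
     (\<forall>t\<ge>0. 0 \<le> \<eta> t) \<and> (\<forall>s\<ge>0. \<forall>t\<ge>0. \<eta> (s + t) \<le> \<eta> s + \<eta> t) \<and>
     (\<eta> \<longlongrightarrow> 0) (at_right 0)"

end

theory Submission
  imports Defs
begin

text \<open>For a fixed control the filter \<open>\<phi>\<close> solves an ODE on the simplex \<open>\<Delta>\<^sub>a\<close> whose vector field is
  Lipschitz there with a constant depending only on a bound for \<open>\<Lambda>\<close>. It is constructed by Picard
  iteration for the field composed with the projection onto \<open>\<Delta>\<^sub>a\<close>, whose solutions never leave
  \<open>\<Delta>\<^sub>a\<close>; by Gronwall's inequality \<open>\<phi>\<close> and the survival factor \<open>\<chi>\<close> depend Lipschitz-continuously
  on the initial law, uniformly in the control. Once \<open>r q\<close> is multiplied out, the running cost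
  is a continuous, hence uniformly continuous, function of \<open>(\<phi>, \<chi>, \<Lambda>(u), f(u))\<close> on a compact
  set, so \<open>J\<close> is bounded and equicontinuous in the initial law, uniformly in the control;
  laws in different simplices are at distance at least \<open>1/|I|\<close>. Finally, a bounded uniformly
  equicontinuous family has a common modulus of continuity, an infimum of affine functions.\<close>


section \<open>The simplices \<open>\<Delta>\<^sub>a\<close>\<close>

lemma Delta_component_bounds:
  assumes "\<nu> \<in> Delta h a" shows "0 \<le> \<nu>$i" "\<nu>$i \<le> 1" "\<bar>\<nu>$i\<bar> \<le> 1"
proof -
  show "0 \<le> \<nu>$i" using assms by (simp add: Delta_def)
  have "\<nu>$i \<le> (\<Sum>j\<in>UNIV. \<nu>$j)"
    by (rule member_le_sum) (use assms in \<open>auto simp: Delta_def\<close>)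
  then show "\<nu>$i \<le> 1" using assms by (simp add: Delta_def)
  then show "\<bar>\<nu>$i\<bar> \<le> 1" using \<open>0 \<le> \<nu>$i\<close> by simp
qed

lemma Delta_sum_fibre:
  assumes "\<nu> \<in> Delta h a" shows "(\<Sum>i\<in>{i. h i = a}. \<nu>$i) = 1"
proof -
  have "(\<Sum>i\<in>UNIV. \<nu>$i) = (\<Sum>i\<in>{i. h i = a}. \<nu>$i)"
    by (rule sum.mono_neutral_right) (use assms in \<open>auto simp: Delta_def\<close>)
  then show ?thesis using assms by (simp add: Delta_def)
qed

lemma norm_Delta_le_1: assumes "\<nu> \<in> Delta h a" shows "norm \<nu> \<le> 1"
  using norm_le_l1_cart[of \<nu>] assms by (simp add: Delta_def)

lemma closed_Delta: "closed (Delta h a)"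
proof -
  have "Delta h a = (\<Inter>i. {\<nu>. 0 \<le> \<nu>$i}) \<inter> {\<nu>. (\<Sum>i\<in>UNIV. \<nu>$i) = 1} \<inter> (\<Inter>i\<in>{i. h i \<noteq> a}. {\<nu>. \<nu>$i = 0})"
    by (auto simp: Delta_def)
  moreover have "closed {\<nu>::real^'a. (\<Sum>i\<in>UNIV. \<nu>$i) = 1}"
    by (intro closed_Collect_eq continuous_intros)
  ultimately show ?thesis
    by (auto intro!: closed_Int closed_INT closed_Collect_le closed_Collect_eq continuous_intros)
qed

lemma convex_Delta: "convex (Delta h a)"
  unfolding convex_def Delta_def
  by (auto simp: sum.distrib sum_distrib_left[symmetric])

lemma compact_Delta: "compact (Delta h a)"
proof -
  have "bounded (Delta h a)"
    unfolding bounded_iff by (intro exI[of _ 1]) (auto intro: norm_Delta_le_1)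
  then show ?thesis by (metis closed_Delta compact_eq_bounded_closed)
qed

lemma compact_Delta_e: "compact (Delta_e (h::'i::finite \<Rightarrow> 'o::finite))"
  unfolding Delta_e_def by (intro compact_Union) (auto simp: compact_Delta)

lemma Delta_subset_Delta_e: "Delta h b \<subseteq> Delta_e h"
  unfolding Delta_e_def by auto

text \<open>This makes the estimate trivial for initial laws in different simplices.\<close>

lemma Delta_different_fibres_dist:
  fixes \<nu> :: "real^'i::finite"
  assumes "\<nu> \<in> Delta h a" "\<rho> \<in> Delta h b" "a \<noteq> b"
  shows "1 \<le> real CARD('i) * norm (\<nu> - \<rho>)"
proof -
  have "1 = (\<Sum>i\<in>{i. h i = a}. \<nu>$i - \<rho>$i)"
    using Delta_sum_fibre[OF assms(1)] assms by (simp add: sum_subtractf Delta_def)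
  also have "\<dots> \<le> (\<Sum>i\<in>{i. h i = a}. norm (\<nu> - \<rho>))"
    by (intro sum_mono) (metis component_le_norm_cart abs_le_D1 vector_minus_component)
  also have "\<dots> = real (card {i. h i = a}) * norm (\<nu> - \<rho>)" by simp
  also have "\<dots> \<le> real CARD('i) * norm (\<nu> - \<rho>)"
    by (intro mult_right_mono) (auto intro: card_mono)
  finally show ?thesis .
qed

lemma closest_point_Delta_component_le:
  fixes z :: "real^'i::finite"
  assumes ne: "Delta h a \<noteq> {}" and zs: "(\<Sum>j\<in>UNIV. z$j) = 1" and zo: "\<And>j. h j \<noteq> a \<Longrightarrow> z$j = 0"
    and pk: "0 < closest_point (Delta h a) z $ k"
  shows "closest_point (Delta h a) z $ k \<le> z $ k"
proof (rule ccontr)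
  define p where "p = closest_point (Delta h a) z"
  have pD: "p \<in> Delta h a" unfolding p_def by (rule closest_point_in_set[OF closed_Delta ne])
  assume "\<not> closest_point (Delta h a) z $ k \<le> z $ k"
  then have zk: "z$k < p$k" by (simp add: p_def)
  have hk: "h k = a" using pk pD by (auto simp: p_def Delta_def)
  have "\<exists>m. p$m < z$m"
  proof (rule ccontr)
    assume "\<not> (\<exists>m. p$m < z$m)"
    then have "(\<Sum>j\<in>UNIV. z$j) < (\<Sum>j\<in>UNIV. p$j)"
      using zk by (intro sum_strict_mono_ex1) (auto simp: not_less)
    then show False using zs pD by (simp add: Delta_def)
  qed
  then obtain m where zm: "p$m < z$m" by blast
  have mk: "m \<noteq> k" using zm zk by auto
  have hm: "h m = a" using zm zo[of m] pD by (cases "h m = a") (auto simp: Delta_def)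
  define d where "d = (z$m - p$m) + (p$k - z$k)"
  have d0: "0 < d" unfolding d_def using zm zk by simp
  define e where "e = min (p$k) (d/2)"
  have e0: "0 < e" unfolding e_def using pk d0 by (simp add: p_def)
  text \<open>Moving mass \<open>e\<close> from \<open>k\<close> to \<open>m\<close> stays in the simplex and gets closer to \<open>z\<close>.\<close>
  define v :: "real^'i" where "v = axis m 1 - axis k 1"
  define y where "y = p + e *\<^sub>R v"
  have ycomp: "y$i = p$i + (if i = m then e else 0) - (if i = k then e else 0)" for i
    unfolding y_def v_def by (simp add: axis_def)
  have yD: "y \<in> Delta h a"
  proof -
    have "0 \<le> y$i" for i
    proof -
      have "0 \<le> p$i" using pD by (simp add: Delta_def)
      moreover have "e \<le> p$k" unfolding e_def by simp
      ultimately show ?thesis unfolding ycomp using e0 mk by auto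
    qed
    moreover have "(\<Sum>i\<in>UNIV. y$i) = 1"
    proof -
      have "(\<Sum>i\<in>UNIV. y$i) = (\<Sum>i\<in>UNIV. p$i) + (\<Sum>i\<in>UNIV. (if i = m then e else 0)) - (\<Sum>i\<in>UNIV. (if i = k then e else 0))"
        unfolding ycomp by (simp add: sum.distrib sum_subtractf)
      then show ?thesis using pD by (simp add: Delta_def)
    qed
    moreover have "h i \<noteq> a \<Longrightarrow> y$i = 0" for i
      using pD hm hk unfolding ycomp by (auto simp: Delta_def)
    ultimately show ?thesis by (simp add: Delta_def)
  qed
  have wv: "inner (z - p) v = d"
    unfolding v_def d_def by (simp add: inner_diff_right inner_axis)
  have vv: "inner v v = 2"
    unfolding v_def using mk by (simp add: inner_diff_left inner_diff_right inner_axis_axis)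
  have "(norm (z - y))^2 = (norm (z - p))^2 - 2 * e * d + e^2 * 2"
  proof -
    have zy: "z - y = (z - p) - e *\<^sub>R v" by (simp add: y_def algebra_simps)
    have "(norm (z - y))^2 = inner ((z - p) - e *\<^sub>R v) ((z - p) - e *\<^sub>R v)"
      unfolding zy[symmetric] by (simp add: power2_norm_eq_inner)
    also have "\<dots> = inner (z - p) (z - p) - 2 * e * inner (z - p) v + e^2 * inner v v"
      by (simp add: inner_diff_left inner_diff_right inner_commute power2_eq_square algebra_simps)
    finally show ?thesis by (simp add: wv vv power2_norm_eq_inner)
  qed
  moreover have "2 * e * d - e^2 * 2 > 0"
  proof -
    have "e < d" using d0 unfolding e_def by simp
    then show ?thesis using e0 by (simp add: power2_eq_square algebra_simps mult_strict_left_mono)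
  qed
  ultimately have "(norm (z - y))^2 < (norm (z - p))^2" by simp
  then have "norm (z - y) < norm (z - p)" by (simp add: power_less_imp_less_base)
  moreover have "dist z p \<le> dist z y"
    unfolding p_def by (rule closest_point_le[OF closed_Delta yD])
  ultimately show False by (simp add: dist_norm)
qed


section \<open>Rate matrices and the vector field \<open>F\<close>\<close>

definition rate_matrix :: "('i::finite \<Rightarrow> 'i \<Rightarrow> real) \<Rightarrow> bool" where
  "rate_matrix M \<longleftrightarrow> (\<forall>i j. i \<noteq> j \<longrightarrow> 0 \<le> M i j) \<and> (\<forall>i. (\<Sum>j\<in>UNIV. M i j) = 0)"

lemma muLam_diff: "muLam lam (p - q) u = muLam lam p u - muLam lam q u"
  by (simp add: muLam_def vec_eq_iff algebra_simps sum_subtractf)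

lemma muLam1_diff: "muLam1 lam h (p - q) u b = muLam1 lam h p u b - muLam1 lam h q u b"
  by (simp add: muLam1_def algebra_simps sum_subtractf)

lemma muLam1_eq_sum_muLam: "muLam1 lam h p u b = (\<Sum>j\<in>{j. h j = b}. muLam lam p u $ j)"
  unfolding muLam_def muLam1_def by (simp add: sum.swap[of _ "{j. h j = b}"])

lemma abs_sum_le_card_mult:
  assumes "finite S" "\<And>i. i \<in> S \<Longrightarrow> \<bar>g i\<bar> \<le> B"
  shows "\<bar>\<Sum>i\<in>S. g i\<bar> \<le> real (card S) * B"
proof -
  have "\<bar>\<Sum>i\<in>S. g i\<bar> \<le> (\<Sum>i\<in>S. \<bar>g i\<bar>)" by (rule sum_abs)
  also have "\<dots> \<le> (\<Sum>i\<in>S. B)" by (intro sum_mono assms)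
  finally show ?thesis by simp
qed

lemma norm_le_card_mult:
  fixes x :: "real^'i::finite"
  assumes "\<And>j. \<bar>x$j\<bar> \<le> B"
  shows "norm x \<le> real CARD('i) * B"
proof -
  have "norm x \<le> (\<Sum>j\<in>UNIV. \<bar>x$j\<bar>)" by (rule norm_le_l1_cart)
  also have "\<dots> \<le> (\<Sum>j\<in>(UNIV::'i set). B)" by (rule sum_mono) (rule assms)
  finally show ?thesis by simp
qed

lemma abs_muLam_nth_le:
  fixes p :: "real^'i::finite"
  assumes lb: "\<And>i j. \<bar>lam u i j\<bar> \<le> Lm" and pb: "\<And>i. \<bar>p$i\<bar> \<le> R" and "0 \<le> Lm" "0 \<le> R"
  shows "\<bar>muLam lam p u $ j\<bar> \<le> real CARD('i) * Lm * R"
proof -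
  have "\<bar>p$i * lam u i j\<bar> \<le> R * Lm" for i j
    unfolding abs_mult by (intro mult_mono pb lb) (use assms in auto)
  then have "\<bar>muLam lam p u $ j\<bar> \<le> real CARD('i) * (R * Lm)"
    unfolding muLam_def by (simp, intro abs_sum_le_card_mult) auto
  then show ?thesis by (simp add: algebra_simps)
qed

lemma abs_muLam1_le:
  fixes p :: "real^'i::finite"
  assumes lb: "\<And>i j. \<bar>lam u i j\<bar> \<le> Lm" and pb: "\<And>i. \<bar>p$i\<bar> \<le> R" and "0 \<le> Lm" "0 \<le> R"
  shows "\<bar>muLam1 lam h p u b\<bar> \<le> real CARD('i) * real CARD('i) * Lm * R"
proof -
  have "\<bar>muLam1 lam h p u b\<bar> \<le> real (card {j. h j = b}) * (real CARD('i) * Lm * R)"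
    unfolding muLam1_eq_sum_muLam
    by (intro abs_sum_le_card_mult abs_muLam_nth_le[where lam=lam and u=u, OF lb pb]) (use assms in auto)
  also have "\<dots> \<le> real CARD('i) * (real CARD('i) * Lm * R)"
    by (intro mult_right_mono) (use assms in \<open>auto intro: card_mono\<close>)
  finally show ?thesis by (simp add: algebra_simps)
qed

lemma Fvf_lipschitz:
  fixes p q :: "real^'i::finite"
  assumes lb: "\<And>i j. \<bar>lam u i j\<bar> \<le> Lm" and pb: "\<And>i. \<bar>p$i\<bar> \<le> R" and qb: "\<And>i. \<bar>q$i\<bar> \<le> 1"
    and "0 \<le> Lm" "0 \<le> R"
  shows "norm (Fvf lam h a p u - Fvf lam h a q u) \<le> 3 * real CARD('i)^3 * Lm * (R + 1) * norm (p - q)"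
proof -
  let ?n = "real CARD('i)"
  let ?d = "norm (p - q)"
  have dq: "\<bar>(p - q)$i\<bar> \<le> ?d" for i by (rule component_le_norm_cart)
  have comp: "\<bar>(Fvf lam h a p u - Fvf lam h a q u)$j\<bar> \<le> 3 * ?n^2 * Lm * (R + 1) * ?d" for j
  proof (cases "h j = a")
    case False then show ?thesis using assms by (simp add: Fvf_def)
  next
    case True
    let ?mp = "muLam1 lam h p u a"
    have eq: "(Fvf lam h a p u - Fvf lam h a q u)$j
      = muLam lam (p - q) u $ j - (?mp * (p - q)$j + muLam1 lam h (p - q) u a * q$j)"
      using True by (simp add: Fvf_def muLam_diff muLam1_diff algebra_simps)
    have t1: "\<bar>muLam lam (p - q) u $ j\<bar> \<le> ?n * ?n * Lm * ?d"
    proof -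
      have "\<bar>muLam lam (p - q) u $ j\<bar> \<le> ?n * Lm * ?d"
        by (rule abs_muLam_nth_le[where lam=lam and u=u, OF lb dq]) (use assms in auto)
      also have "\<dots> \<le> ?n * ?n * Lm * ?d"
        using assms by (intro mult_right_mono) (auto intro: mult_right_mono)
      finally show ?thesis .
    qed
    have t2: "\<bar>?mp * (p - q)$j\<bar> \<le> (?n * ?n * Lm * R) * ?d"
      unfolding abs_mult by (intro mult_mono abs_muLam1_le[where lam=lam and u=u, OF lb pb] dq) (use assms in auto)
    have t3: "\<bar>muLam1 lam h (p - q) u a * q$j\<bar> \<le> (?n * ?n * Lm * ?d) * 1"
      unfolding abs_mult by (intro mult_mono abs_muLam1_le[where lam=lam and u=u, OF lb dq] qb) (use assms in auto)
    have "\<bar>(Fvf lam h a p u - Fvf lam h a q u)$j\<bar> \<le> ?n * ?n * Lm * ?d * (R + 2)"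
      using t1 t2 t3 unfolding eq by (simp add: algebra_simps)
    also have "\<dots> \<le> ?n * ?n * Lm * ?d * (3 * (R + 1))"
      using assms by (intro mult_left_mono) auto
    finally show ?thesis by (simp add: power2_eq_square algebra_simps)
  qed
  have "norm (Fvf lam h a p u - Fvf lam h a q u) \<le> ?n * (3 * ?n^2 * Lm * (R + 1) * ?d)"
    by (rule norm_le_card_mult[OF comp])
  then show ?thesis by (simp add: power3_eq_cube power2_eq_square algebra_simps)
qed

lemma Fvf_zero: "Fvf lam h a 0 u = 0"
  by (simp add: Fvf_def muLam_def muLam1_def vec_eq_iff)

lemma sum_Fvf_eq_0:
  assumes "p \<in> Delta h a"
  shows "(\<Sum>j\<in>UNIV. Fvf lam h a p u $ j) = 0"
proof -
  have "(\<Sum>j\<in>UNIV. Fvf lam h a p u $ j) = (\<Sum>j\<in>{j. h j = a}. muLam lam p u $ j - muLam1 lam h p u a * p$j)"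
    by (simp add: Fvf_def sum.If_cases Int_def)
  also have "\<dots> = muLam1 lam h p u a - muLam1 lam h p u a * (\<Sum>j\<in>{j. h j = a}. p$j)"
    by (simp add: sum_subtractf sum_distrib_left muLam1_eq_sum_muLam)
  finally show ?thesis using Delta_sum_fibre[OF assms] by simp
qed

lemma muLam_nth_nonneg:
  assumes "p \<in> Delta h a" "rate_matrix (lam u)" "p$j = 0"
  shows "0 \<le> muLam lam p u $ j"
  unfolding muLam_def
proof (simp, rule sum_nonneg)
  fix i
  show "0 \<le> p$i * lam u i j"
  proof (cases "i = j")
    case True then show ?thesis using assms(3) by simp
  next
    case False then show ?thesis
      using assms(2) Delta_component_bounds(1)[OF assms(1), of i] by (simp add: rate_matrix_def)
  qed
qed

lemma muLam1_nonneg: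
  assumes "p \<in> Delta h a" "rate_matrix (lam u)" "b \<noteq> a"
  shows "0 \<le> muLam1 lam h p u b"
  unfolding muLam1_eq_sum_muLam using assms by (auto intro!: sum_nonneg muLam_nth_nonneg simp: Delta_def)

lemma sum_muLam1_eq_0:
  fixes h :: "'i::finite \<Rightarrow> 'o::finite"
  assumes "rate_matrix (lam u)"
  shows "(\<Sum>b\<in>UNIV. muLam1 lam h p u b) = 0"
proof -
  have "(\<Sum>b\<in>UNIV. muLam1 lam h p u b) = (\<Sum>j\<in>UNIV. muLam lam p u $ j)"
  proof -
    have "\<And>b. {j. j \<in> UNIV \<and> h j = b} = {j. h j = b}" by simp
    then show ?thesis unfolding muLam1_eq_sum_muLam using sum.group[of UNIV UNIV h "\<lambda>j. muLam lam p u $ j"] by simp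
  qed
  also have "\<dots> = (\<Sum>i\<in>UNIV. p$i * (\<Sum>j\<in>UNIV. lam u i j))"
    unfolding muLam_def by (simp add: sum_distrib_left) (rule sum.swap)
  also have "\<dots> = 0" using assms by (simp add: rate_matrix_def)
  finally show ?thesis .
qed

lemma rr_eq_sum_muLam1:
  fixes h :: "'i::finite \<Rightarrow> 'o::finite"
  assumes "rate_matrix (lam u)"
  shows "rr lam h a p u = (\<Sum>b\<in>UNIV - {a}. muLam1 lam h p u b)"
  using sum_muLam1_eq_0[where lam=lam and u=u, OF assms, of h p] by (simp add: rr_def sum_diff1)

lemma rr_nonneg:
  fixes h :: "'i::finite \<Rightarrow> 'o::finite"
  assumes "p \<in> Delta h a" "rate_matrix (lam u)"
  shows "0 \<le> rr lam h a p u"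
  unfolding rr_eq_sum_muLam1[where lam=lam and u=u, OF assms(2)] by (auto intro!: sum_nonneg muLam1_nonneg assms)

lemma Hb_in_Delta:
  assumes y: "\<And>j. h j = b \<Longrightarrow> 0 \<le> y$j" and n: "nu0 b \<in> Delta h b"
  shows "Hb h nu0 b y \<in> Delta h b"
proof (cases "(\<Sum>i\<in>{i. h i = b}. y$i) = 0")
  case True then show ?thesis using n by (simp add: Hb_def)
next
  case False
  define S where "S = (\<Sum>i\<in>{i. h i = b}. y$i)"
  have "0 \<le> S" unfolding S_def by (rule sum_nonneg) (use y in auto)
  then have S0: "0 < S" using False by (simp add: S_def)
  have "(\<Sum>i\<in>UNIV. (if h i = b then y$i / S else 0)) = (\<Sum>i\<in>{i. h i = b}. y$i / S)"
    by (simp add: sum.If_cases Int_def)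
  also have "\<dots> = 1" using S0 by (simp add: sum_divide_distrib[symmetric] S_def)
  finally show ?thesis using False S0 y unfolding Hb_def S_def[symmetric]
    by (auto simp: Delta_def)
qed

lemma gronwall_integral:
  fixes g :: "real \<Rightarrow> real"
  assumes cont: "continuous_on {0..T} g" and c: "0 \<le> c" and L: "0 \<le> L"
    and le: "\<And>s. s \<in> {0..T} \<Longrightarrow> g s \<le> c + L * integral {0..s} g"
    and t: "t \<in> {0..T}"
  shows "g t \<le> c * exp (L * t)"
proof -
  define G where "G s = integral {0..s} g" for s
  define H where "H s = exp (- (L * s)) * (c + L * G s)" for s
  define H' where "H' s = exp (- (L * s)) * (L * g s) - L * exp (- (L * s)) * (c + L * G s)" for s
  have ct: "continuous_on {0..t} g" by (rule continuous_on_subset[OF cont]) (use t in auto)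
  have dG: "(G has_real_derivative g s) (at s within {0..t})" if "s \<in> {0..t}" for s
    unfolding G_def by (rule integral_has_real_derivative[OF ct that])
  have dH: "(H has_real_derivative H' s) (at s within {0..t})" if "s \<in> {0..t}" for s
    unfolding H_def H'_def
    by (rule derivative_eq_intros dG[OF that] refl | simp)+
  have "(H' has_integral (H t - H 0)) {0..t}"
    using t dH by (intro fundamental_theorem_of_calculus)
      (auto simp: has_real_derivative_iff_has_vector_derivative)
  moreover have "H' s \<le> 0" if "s \<in> {0..t}" for s
  proof -
    have "g s \<le> c + L * G s" unfolding G_def using that t by (intro le) auto
    then have "L * g s - L * (c + L * G s) \<le> 0" using L by (simp add: mult_left_mono)
    moreover have "H' s = exp (- (L * s)) * (L * g s - L * (c + L * G s))"
      unfolding H'_def by (simp add: algebra_simps)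
    ultimately show ?thesis by (simp add: mult_nonneg_nonpos)
  qed
  ultimately have "H t - H 0 \<le> 0"
    using has_integral_le[of H' "H t - H 0" "{0..t}" "\<lambda>_. 0" 0] by (simp add: has_integral_0)
  moreover have "H 0 = c" by (simp add: H_def G_def)
  ultimately have "exp (- (L * t)) * (c + L * G t) \<le> c" unfolding H_def by linarith
  then have "c + L * G t \<le> c * exp (L * t)"
    by (simp add: exp_minus field_simps)
  moreover have "g t \<le> c + L * G t" unfolding G_def using t by (intro le) auto
  ultimately show ?thesis by linarith
qed

lemma gronwall_integral_zero:
  fixes g :: "real \<Rightarrow> real"
  assumes "continuous_on {0..T} g" "0 \<le> L" "\<And>s. s \<in> {0..T} \<Longrightarrow> 0 \<le> g s"
    and "\<And>s. s \<in> {0..T} \<Longrightarrow> g s \<le> L * integral {0..s} g"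
    and "t \<in> {0..T}"
  shows "g t = 0"
  using gronwall_integral[OF assms(1) order_refl assms(2) _ assms(5)] assms(3-5) by fastforce

text \<open>Look at the last time before \<open>t\<close> at which \<open>z\<close> is nonnegative.\<close>

lemma integral_equation_nonneg:
  fixes z g :: "real \<Rightarrow> real"
  assumes zc: "continuous_on {0..t} z" and z0: "0 \<le> z 0" and t0: "0 \<le> t"
    and eq: "\<And>s. s \<in> {0..t} \<Longrightarrow> (g has_integral (z s - z 0)) {0..s}"
    and g: "\<And>s. s \<in> {0..t} \<Longrightarrow> z s < 0 \<Longrightarrow> 0 \<le> g s"
  shows "0 \<le> z t"
proof (rule ccontr)
  assume "\<not> 0 \<le> z t"
  then have ztk: "z t < 0" by simp
  define S where "S = {0..t} \<inter> z -` {0..}"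
  have cS: "closed S" unfolding S_def by (rule continuous_closed_preimage[OF zc]) auto
  have "0 \<in> S" using z0 t0 by (simp add: S_def)
  then have Sne: "S \<noteq> {}" by auto
  have bS: "bdd_above S" unfolding S_def by (auto intro: bdd_aboveI[of _ t])
  define t1 where "t1 = Sup S"
  have t1S: "t1 \<in> S" unfolding t1_def by (rule closed_contains_Sup[OF Sne bS cS])
  have t10: "0 \<le> t1" and t1t: "t1 < t"
    using t1S ztk by (auto simp: S_def less_le)
  have neg: "z s < 0" if "s \<in> {t1<..t}" for s
  proof (rule ccontr)
    assume "\<not> z s < 0"
    then have "s \<in> S" using that t10 by (auto simp: S_def)
    then have "s \<le> t1" unfolding t1_def by (rule cSup_upper[OF _ bS])
    then show False using that by simp
  qed
  have gt: "(g has_integral (z t - z 0)) {0..t}" by (rule eq) (use t0 in auto)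
  have gt1: "(g has_integral (z t1 - z 0)) {0..t1}" by (rule eq) (use t10 t1t in auto)
  have gint: "g integrable_on {0..t}" using gt by blast
  have comb: "integral {0..t1} g + integral {t1..t} g = integral {0..t} g"
    by (rule Henstock_Kurzweil_Integration.integral_combine[OF t10 less_imp_le[OF t1t] gint])
  define g' where "g' s = (if s = t1 then 0 else g s)" for s
  have gi: "g integrable_on {t1..t}"
    by (rule integrable_subinterval_real[OF gint]) (use t10 in auto)
  have g'i: "g' integrable_on {t1..t}"
    by (rule integrable_spike[OF gi negligible_sing[of t1]]) (simp add: g'_def)
  have "integral {t1..t} g = integral {t1..t} g'"
    by (rule integral_spike[of "{t1}"]) (auto simp: g'_def)
  also have "0 \<le> integral {t1..t} g'"
    by (rule integral_nonneg[OF g'i]) (use neg g t10 in \<open>auto simp: g'_def\<close>)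
  finally have "z t1 \<le> z t"
    using comb integral_unique[OF gt] integral_unique[OF gt1] by linarith
  then show False using t1S ztk by (simp add: S_def)
qed

lemma exp_minus_abs_diff_le:
  fixes x y :: real assumes "0 \<le> x" "0 \<le> y"
  shows "\<bar>exp (- x) - exp (- y)\<bar> \<le> \<bar>x - y\<bar>"
proof -
  have *: "exp (- x) - exp (- y) \<le> y - x" if "0 \<le> x" "x \<le> y" for x y :: real
  proof -
    have "1 - exp (- (y - x)) \<le> y - x" using exp_ge_add_one_self[of "- (y - x)"] by linarith
    then have "exp (- x) * (1 - exp (- (y - x))) \<le> 1 * (y - x)"
      using that by (intro mult_mono) auto
    moreover have "exp (- x) * (1 - exp (- (y - x))) = exp (- x) - exp (- y)"
      by (simp add: algebra_simps exp_add[symmetric])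
    ultimately show ?thesis by simp
  qed
  show ?thesis
    using *[OF assms(1)] *[OF assms(2)] by (cases "x \<le> y") auto
qed

lemma has_integral_power_Icc_0:
  fixes t :: real assumes "0 \<le> t"
  shows "((\<lambda>s. s^k) has_integral (t^(Suc k) / real (Suc k))) {0..t}"
proof -
  have "((\<lambda>s. s^(Suc k) / real (Suc k)) has_real_derivative s^k) (at s within {0..t})" for s
    by (rule derivative_eq_intros refl | simp)+
  then have "((\<lambda>s. s^k) has_integral (t^(Suc k) / real (Suc k) - 0^(Suc k) / real (Suc k))) {0..t}"
    using assms by (intro fundamental_theorem_of_calculus)
      (auto simp: has_real_derivative_iff_has_vector_derivative[symmetric])
  then show ?thesis by simp
qed

lemma has_integral_vec_nth: "(f has_integral I) S \<Longrightarrow> ((\<lambda>s. f s $ j) has_integral I $ j) S"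
  using has_integral_linear[OF _ bounded_linear_vec_nth, of f I S j] by (simp add: o_def)

lemma integral_Icc_0_nonpos: fixes t :: real assumes "t \<le> 0" shows "integral {0..t} g = 0"
  using assms by (cases "t < 0") auto

lemma continuous_on_UNIV_if_constant_on_nonpos:
  fixes F :: "real \<Rightarrow> 'b::topological_space"
  assumes "\<And>N. 0 \<le> N \<Longrightarrow> continuous_on {0..N} F" "\<And>t. t \<le> 0 \<Longrightarrow> F t = F 0"
  shows "continuous_on UNIV F"
proof (rule continuous_at_imp_continuous_on, intro ballI)
  fix x :: real
  define N where "N = \<bar>x\<bar> + 1"
  have "continuous_on {..0} (\<lambda>_. F 0)" by simp
  then have "continuous_on {..0} F"
    by (rule continuous_on_eq) (metis assms(2) atMost_iff)
  then have "continuous_on ({..0} \<union> {0..N}) F"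
    using assms(1) by (intro continuous_on_closed_Un) (auto simp: N_def)
  moreover have "{..0} \<union> {0..N} = {..N}" unfolding N_def by auto
  ultimately have c: "continuous_on {..N} F" by simp
  have "x \<in> {..<N}" unfolding N_def by simp
  then have "x \<in> interior {..N}" by (rule interiorI[OF open_lessThan]) auto
  then show "isCont F x" by (rule continuous_on_interior[OF c])
qed

lemma continuous_on_integral_from_0:
  fixes g :: "real \<Rightarrow> 'b::banach"
  assumes "\<And>N. g integrable_on {0..N}"
  shows "continuous_on UNIV (\<lambda>t. c + integral {0..t} g)"
proof (rule continuous_on_UNIV_if_constant_on_nonpos)
  show "continuous_on {0..N} (\<lambda>t. c + integral {0..t} g)" for N
    by (intro continuous_on_add continuous_on_const indefinite_integral_continuous_1 assms)
qed (simp add: integral_Icc_0_nonpos)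

lemma integrable_on_Icc_if_bounded_measurable:
  fixes f :: "real \<Rightarrow> 'b::euclidean_space"
  assumes "f \<in> borel_measurable lebesgue" "\<And>s. s \<in> {a..b} \<Longrightarrow> norm (f s) \<le> C"
  shows "f integrable_on {a..b}"
proof (rule measurable_bounded_by_integrable_imp_integrable[where g="\<lambda>_. C"])
  show "f \<in> borel_measurable (lebesgue_on {a..b})"
    using assms(1) by (rule measurable_restrict_space1)
qed (use assms(2) in auto)

lemma borel_measurable_lebesgue_if_borel: "f \<in> borel_measurable borel \<Longrightarrow> f \<in> borel_measurable lebesgue"
  by (rule measurable_completion) (simp add: measurable_lborel2)

lemma continuous_imp_borel_measurable_lebesgue:
  "continuous_on UNIV f \<Longrightarrow> f \<in> borel_measurable lebesgue"
  by (intro borel_measurable_lebesgue_if_borel borel_measurable_continuous_onI)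

lemma borel_measurable_continuous_on_comp:
  assumes "continuous_on S \<Phi>" "\<And>x. x \<in> space M \<Longrightarrow> g x \<in> S" "g \<in> borel_measurable M"
  shows "(\<lambda>x. \<Phi> (g x)) \<in> borel_measurable M"
proof -
  have "g \<in> M \<rightarrow>\<^sub>M restrict_space borel S"
    using assms(2,3) by (intro measurable_restrict_space2) auto
  from measurable_comp[OF this borel_measurable_continuous_on_restrict[OF assms(1)]]
  show ?thesis by (simp add: o_def)
qed

section \<open>The filter equation for a fixed control\<close>

text \<open>A control value \<open>u\<close> enters the model only through \<open>(\<Lambda>(u), f(u))\<close>. We therefore work with
  this pair itself as the control; its values then range over a compact subset of a Euclidean
  space, whatever \<open>U\<close> is.\<close>

definition canon_lam :: "(real^'i^'i) \<times> (real^'i) \<Rightarrow> 'i \<Rightarrow> 'i \<Rightarrow> real" where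
  "canon_lam u i j = fst u $ i $ j"

definition canon_f :: "'i \<Rightarrow> (real^'i^'i) \<times> (real^'i) \<Rightarrow> real" where
  "canon_f i u = snd u $ i"

lemma continuous_on_Fvf_canon: "continuous_on UNIV (\<lambda>x. Fvf canon_lam h a (fst x) (snd x))"
  unfolding Fvf_def muLam_def muLam1_def canon_lam_def
  apply (rule continuous_on_vec_lambda)
  subgoal for j by (cases "h j = a") (simp_all, intro continuous_intros)
  done

lemma continuous_on_rr_canon: "continuous_on UNIV (\<lambda>x. rr canon_lam h a (fst x) (snd x))"
  unfolding rr_def muLam1_def canon_lam_def by (intro continuous_intros)

locale controlled_flow =
  fixes h :: "'i::finite \<Rightarrow> 'o::finite" and a :: 'o and B :: "real \<Rightarrow> (real^'i^'i) \<times> (real^'i)"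
    and Lm :: real
  assumes B_measurable: "B \<in> borel_measurable lebesgue"
    and B_rate_matrix: "\<And>s. rate_matrix (canon_lam (B s))"
    and B_bounded: "\<And>s i j. \<bar>canon_lam (B s) i j\<bar> \<le> Lm"
    and Delta_nonempty: "Delta h a \<noteq> {}"
begin

definition "cF = 3 * real CARD('i) ^ 3 * Lm + 1"
definition "cR = real CARD('i) * real CARD('i) * Lm"

definition "F p s = Fvf canon_lam h a p (B s)"

text \<open>\<open>F\<close> is Lipschitz only on bounded sets, so we first solve the equation for the globally
  Lipschitz field \<open>G\<close> obtained by projecting onto \<open>\<Delta>\<^sub>a\<close>; its solutions stay in \<open>\<Delta>\<^sub>a\<close>, where \<open>G = F\<close>.\<close>

definition "proj z = closest_point (Delta h a) z"

definition "G z s = F (proj z) s"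

lemma Lm_nonneg: "0 \<le> Lm" using B_bounded[of 0 undefined undefined] by simp

lemma cF_pos: "0 < cF" unfolding cF_def using Lm_nonneg by (simp add: add_nonneg_pos)

lemma F_lipschitz:
  assumes "\<And>i. \<bar>p$i\<bar> \<le> R" "\<And>i. \<bar>q$i\<bar> \<le> 1" "0 \<le> R"
  shows "norm (F p s - F q s) \<le> cF * (R + 1) * norm (p - q)"
proof -
  have "norm (F p s - F q s) \<le> 3 * real CARD('i)^3 * Lm * (R + 1) * norm (p - q)"
    unfolding F_def by (rule Fvf_lipschitz[where lam=canon_lam and u="B s", OF B_bounded assms(1,2) Lm_nonneg assms(3)])
  also have "\<dots> \<le> cF * (R + 1) * norm (p - q)"
    unfolding cF_def using assms(3) by (intro mult_right_mono) auto
  finally show ?thesis .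
qed

lemma F_lipschitz_Delta:
  assumes "p \<in> Delta h a" "q \<in> Delta h a"
  shows "norm (F p s - F q s) \<le> 2 * cF * norm (p - q)"
  using F_lipschitz[of p 1 q s] Delta_component_bounds[OF assms(1)] Delta_component_bounds[OF assms(2)]
  by simp

lemma norm_F_le:
  assumes "p \<in> Delta h a" shows "norm (F p s) \<le> 2 * cF"
proof -
  have "norm (F p s - F 0 s) \<le> cF * (1 + 1) * norm (p - 0)"
    by (rule F_lipschitz) (use Delta_component_bounds[OF assms] in auto)
  also have "\<dots> \<le> cF * (1 + 1) * 1"
    using norm_Delta_le_1[OF assms] cF_pos by (intro mult_left_mono) auto
  finally show ?thesis by (simp add: F_def Fvf_zero)
qed

lemma proj_in_Delta: "proj z \<in> Delta h a"
  unfolding proj_def by (rule closest_point_in_set[OF closed_Delta Delta_nonempty])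

lemma proj_id: "z \<in> Delta h a \<Longrightarrow> proj z = z"
  unfolding proj_def by (rule closest_point_self)

lemma G_lipschitz: "norm (G z s - G y s) \<le> 2 * cF * norm (z - y)"
proof -
  have "norm (G z s - G y s) \<le> 2 * cF * norm (proj z - proj y)"
    unfolding G_def by (rule F_lipschitz_Delta[OF proj_in_Delta proj_in_Delta])
  also have "\<dots> \<le> 2 * cF * norm (z - y)"
    using closest_point_lipschitz[OF convex_Delta closed_Delta Delta_nonempty, of z y] cF_pos
    by (intro mult_left_mono) (auto simp: proj_def dist_norm)
  finally show ?thesis .
qed

lemma norm_G_le: "norm (G z s) \<le> 2 * cF"
  unfolding G_def by (rule norm_F_le[OF proj_in_Delta])

lemma F_measurable:
  assumes "x \<in> borel_measurable lebesgue"
  shows "(\<lambda>s. F (x s) s) \<in> borel_measurable lebesgue"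
  using borel_measurable_continuous_on[OF continuous_on_Fvf_canon borel_measurable_Pair[OF assms B_measurable]]
  by (simp add: F_def)

lemma G_integrable:
  assumes "x \<in> borel_measurable lebesgue"
  shows "(\<lambda>s. G (x s) s) integrable_on {c..d}"
proof (rule integrable_on_Icc_if_bounded_measurable[OF _ norm_G_le])
  have "(\<lambda>s. proj (x s)) \<in> borel_measurable lebesgue"
    unfolding proj_def
    by (rule borel_measurable_continuous_on[OF continuous_on_closest_point[OF convex_Delta closed_Delta Delta_nonempty] assms])
  then show "(\<lambda>s. G (x s) s) \<in> borel_measurable lebesgue"
    unfolding G_def by (rule F_measurable)
qed


subsection \<open>Existence by Picard iteration\<close>

primrec picard :: "real^'i \<Rightarrow> nat \<Rightarrow> real \<Rightarrow> real^'i" where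
  "picard \<nu> 0 = (\<lambda>t. \<nu>)"
| "picard \<nu> (Suc k) = (\<lambda>t. \<nu> + integral {0..t} (\<lambda>s. G (picard \<nu> k s) s))"

lemma picard_Suc: "picard \<nu> (Suc k) t = \<nu> + integral {0..t} (\<lambda>s. G (picard \<nu> k s) s)"
  by simp

declare picard.simps(2)[simp del]

lemma continuous_on_picard: "continuous_on UNIV (picard \<nu> k)"
proof (induction k)
  case (Suc k)
  show ?case unfolding picard.simps(2)
    by (rule continuous_on_integral_from_0) (rule G_integrable[OF continuous_imp_borel_measurable_lebesgue[OF Suc]])
qed simp

lemma picard_integrable: "(\<lambda>s. G (picard \<nu> k s) s) integrable_on {c..d}"
  by (rule G_integrable[OF continuous_imp_borel_measurable_lebesgue[OF continuous_on_picard]])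

lemma picard_nonpos: "t \<le> 0 \<Longrightarrow> picard \<nu> k t = \<nu>"
  by (cases k) (simp_all add: picard_Suc integral_Icc_0_nonpos)

lemma norm_picard_step_le:
  assumes "0 \<le> t"
  shows "norm (picard \<nu> (Suc k) t - picard \<nu> k t) \<le> (2*cF)^(Suc k) * t^(Suc k) / fact (Suc k)"
  using assms
proof (induction k arbitrary: t)
  case 0
  have "norm (integral {0..t} (\<lambda>s. G \<nu> s)) \<le> integral {0..t} (\<lambda>_. 2*cF)"
    by (rule integral_norm_bound_integral[OF picard_integrable[of \<nu> 0, simplified] integrable_const_ivl])
      (rule norm_G_le)
  then show ?case using 0 by (simp add: picard_Suc algebra_simps)
next
  case (Suc k)
  let ?L = "2*cF"
  define C where "C = ?L^(Suc (Suc k)) / fact (Suc k)"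
  have eq: "picard \<nu> (Suc (Suc k)) t - picard \<nu> (Suc k) t
      = integral {0..t} (\<lambda>s. G (picard \<nu> (Suc k) s) s - G (picard \<nu> k s) s)"
    by (simp only: picard_Suc[of \<nu> "Suc k" t] picard_Suc[of \<nu> k t])
      (simp add: integral_diff[OF picard_integrable picard_integrable])
  have hi: "((\<lambda>s. C * s^(Suc k)) has_integral (C * (t^(Suc (Suc k)) / real (Suc (Suc k))))) {0..t}"
    by (rule has_integral_mult_right[OF has_integral_power_Icc_0[OF Suc.prems]])
  have "norm (integral {0..t} (\<lambda>s. G (picard \<nu> (Suc k) s) s - G (picard \<nu> k s) s))
      \<le> integral {0..t} (\<lambda>s. C * s^(Suc k))"
  proof (rule integral_norm_bound_integral)
    show "(\<lambda>s. G (picard \<nu> (Suc k) s) s - G (picard \<nu> k s) s) integrable_on {0..t}"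
      by (intro integrable_diff picard_integrable)
    show "(\<lambda>s. C * s^(Suc k)) integrable_on {0..t}" using hi by blast
    fix s assume s: "s \<in> {0..t}"
    have "norm (G (picard \<nu> (Suc k) s) s - G (picard \<nu> k s) s) \<le> ?L * norm (picard \<nu> (Suc k) s - picard \<nu> k s)"
      by (rule G_lipschitz)
    also have "\<dots> \<le> ?L * (?L^(Suc k) * s^(Suc k) / fact (Suc k))"
      using Suc.IH[of s] s cF_pos by (intro mult_left_mono) auto
    finally show "norm (G (picard \<nu> (Suc k) s) s - G (picard \<nu> k s) s) \<le> C * s^(Suc k)"
      by (simp add: C_def)
  qed
  also have "\<dots> = C * (t^(Suc (Suc k)) / real (Suc (Suc k)))" using hi by blast
  also have "\<dots> = ?L^(Suc (Suc k)) * t^(Suc (Suc k)) / fact (Suc (Suc k))"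
    unfolding C_def by (simp add: field_simps fact_Suc[of "Suc k"] del: fact_Suc)
  finally show ?case unfolding eq .
qed

definition "sol \<nu> t = \<nu> + (\<Sum>k. picard \<nu> (Suc k) t - picard \<nu> k t)"

lemma picard_uniform_limit: "uniform_limit {0..N} (picard \<nu>) (sol \<nu>) sequentially"
proof -
  have "summable (\<lambda>k. (2*cF)^(Suc k) * N^(Suc k) / fact (Suc k))"
  proof -
    have "summable (\<lambda>n. inverse (fact (Suc n)) * (2*cF*N)^(Suc n))"
      using summable_exp[of "2*cF*N"] by (subst summable_Suc_iff)
    then show ?thesis by (simp add: power_mult_distrib field_simps)
  qed
  then have u: "uniform_limit {0..N} (\<lambda>k t. \<Sum>i<k. picard \<nu> (Suc i) t - picard \<nu> i t)
      (\<lambda>t. \<Sum>i. picard \<nu> (Suc i) t - picard \<nu> i t) sequentially"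
  proof (rule Weierstrass_m_test[rotated])
    fix k t assume t: "t \<in> {0..N}"
    have "norm (picard \<nu> (Suc k) t - picard \<nu> k t) \<le> (2*cF)^(Suc k) * t^(Suc k) / fact (Suc k)"
      using t by (intro norm_picard_step_le) auto
    also have "\<dots> \<le> (2*cF)^(Suc k) * N^(Suc k) / fact (Suc k)"
      using t cF_pos by (intro divide_right_mono mult_left_mono power_mono) auto
    finally show "norm (picard \<nu> (Suc k) t - picard \<nu> k t) \<le> (2*cF)^(Suc k) * N^(Suc k) / fact (Suc k)" .
  qed
  have telescope: "\<nu> + (\<Sum>i<k. picard \<nu> (Suc i) t - picard \<nu> i t) = picard \<nu> k t" for k t
    using sum_lessThan_telescope[of "\<lambda>i. picard \<nu> i t" k] by simp
  show ?thesis
    using uniform_limit_add[OF uniform_limit_const u, of "\<lambda>_. \<nu>"] unfolding sol_def telescope .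
qed

lemma sol_nonpos: "t \<le> 0 \<Longrightarrow> sol \<nu> t = \<nu>"
  by (simp add: sol_def picard_nonpos)

lemma continuous_on_sol: "continuous_on UNIV (sol \<nu>)"
proof (rule continuous_on_UNIV_if_constant_on_nonpos)
  show "continuous_on {0..N} (sol \<nu>)" for N
    by (rule uniform_limit_theorem[OF _ picard_uniform_limit])
      (auto intro: always_eventually continuous_on_subset[OF continuous_on_picard])
qed (simp add: sol_nonpos)

lemma sol_measurable: "sol \<nu> \<in> borel_measurable lebesgue"
  by (rule continuous_imp_borel_measurable_lebesgue[OF continuous_on_sol])

lemma sol_integral_equation_G:
  assumes t: "0 \<le> t"
  shows "((\<lambda>s. G (sol \<nu> s) s) has_integral (sol \<nu> t - \<nu>)) {0..t}"
proof -
  define I where "I = integral {0..t} (\<lambda>s. G (sol \<nu> s) s)"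
  have intS: "(\<lambda>s. G (sol \<nu> s) s) integrable_on {0..t}" by (rule G_integrable[OF sol_measurable])
  have "(\<lambda>k. picard \<nu> (Suc k) t) \<longlonglongrightarrow> \<nu> + I"
  proof (rule tendstoI)
    fix e :: real assume e: "0 < e"
    define e' where "e' = e / (2*cF*t + 1)"
    have tpos: "0 < 2*cF*t + 1" using cF_pos t by (simp add: add_nonneg_pos)
    have "\<forall>\<^sub>F k in sequentially. \<forall>s\<in>{0..t}. dist (picard \<nu> k s) (sol \<nu> s) < e'"
      by (rule uniform_limitD[OF picard_uniform_limit]) (use e tpos in \<open>simp add: e'_def\<close>)
    then show "\<forall>\<^sub>F k in sequentially. dist (picard \<nu> (Suc k) t) (\<nu> + I) < e"
    proof eventually_elim
      case (elim k)
      have "dist (picard \<nu> (Suc k) t) (\<nu> + I) = norm (integral {0..t} (\<lambda>s. G (picard \<nu> k s) s - G (sol \<nu> s) s))"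
        by (simp add: picard_Suc dist_norm I_def integral_diff[OF picard_integrable intS])
      also have "\<dots> \<le> integral {0..t} (\<lambda>_. 2*cF*e')"
      proof (rule integral_norm_bound_integral)
        show "(\<lambda>s. G (picard \<nu> k s) s - G (sol \<nu> s) s) integrable_on {0..t}"
          by (intro integrable_diff picard_integrable intS)
        fix s assume "s \<in> {0..t}"
        then have "2*cF * norm (picard \<nu> k s - sol \<nu> s) \<le> 2*cF*e'"
          using elim cF_pos by (intro mult_left_mono) (auto simp: dist_norm less_imp_le)
        then show "norm (G (picard \<nu> k s) s - G (sol \<nu> s) s) \<le> 2*cF*e'"
          using G_lipschitz[of "picard \<nu> k s" s "sol \<nu> s"] by linarith
      qed (rule integrable_const_ivl)
      also have "\<dots> = e * (2*cF*t) / (2*cF*t + 1)" using t by (simp add: e'_def field_simps)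
      also have "\<dots> < e" using e tpos by (simp add: field_simps)
      finally show ?case .
    qed
  qed
  moreover have "(\<lambda>k. picard \<nu> (Suc k) t) \<longlonglongrightarrow> sol \<nu> t"
    using LIMSEQ_Suc[OF tendsto_uniform_limitI[OF picard_uniform_limit[where N=t and \<nu>=\<nu>], of t]] t by simp
  ultimately have "sol \<nu> t = \<nu> + I" using LIMSEQ_unique by blast
  then show ?thesis using intS unfolding I_def by (simp add: integrable_integral)
qed


lemma sol_off_fibre:
  assumes "\<nu> \<in> Delta h a" "h j \<noteq> a" shows "sol \<nu> t $ j = 0"
proof (cases "t \<le> 0")
  case True then show ?thesis using assms by (simp add: sol_nonpos Delta_def)
next
  case False
  have "((\<lambda>s. G (sol \<nu> s) s $ j) has_integral (sol \<nu> t - \<nu>) $ j) {0..t}"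
    by (rule has_integral_vec_nth[OF sol_integral_equation_G]) (use False in auto)
  moreover have "G x s $ j = 0" for x s using assms(2) by (simp add: G_def F_def Fvf_def)
  ultimately have "(sol \<nu> t - \<nu>) $ j = 0" by (simp add: has_integral_0_eq)
  then show ?thesis using assms by (simp add: Delta_def)
qed

lemma sum_sol_eq_1:
  assumes "\<nu> \<in> Delta h a" shows "(\<Sum>j\<in>UNIV. sol \<nu> t $ j) = 1"
proof (cases "t \<le> 0")
  case True then show ?thesis using assms by (simp add: sol_nonpos Delta_def)
next
  case False
  have "((\<lambda>s. \<Sum>j\<in>UNIV. G (sol \<nu> s) s $ j) has_integral (\<Sum>j\<in>UNIV. (sol \<nu> t - \<nu>) $ j)) {0..t}"
    by (intro has_integral_sum finite_UNIV ballI has_integral_vec_nth[OF sol_integral_equation_G])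
      (use False in auto)
  moreover have "(\<Sum>j\<in>UNIV. G x s $ j) = 0" for x s
    unfolding G_def F_def by (rule sum_Fvf_eq_0[OF proj_in_Delta])
  ultimately have "(\<Sum>j\<in>UNIV. (sol \<nu> t - \<nu>) $ j) = 0" by (simp add: has_integral_0_eq)
  then show ?thesis using assms by (simp add: sum_subtractf Delta_def)
qed

text \<open>At a point with a negative coordinate the projection onto the simplex vanishes in that
  coordinate, so only the nonnegative off-diagonal rates contribute to \<open>G\<close> there.\<close>

lemma G_nth_nonneg:
  assumes "(\<Sum>j\<in>UNIV. x$j) = 1" "\<And>j. h j \<noteq> a \<Longrightarrow> x$j = 0" "x$k < 0"
  shows "0 \<le> G x s $ k"
proof -
  define p where "p = proj x"
  have pD: "p \<in> Delta h a" unfolding p_def by (rule proj_in_Delta)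
  have pk: "p$k = 0"
  proof (rule ccontr)
    assume "p$k \<noteq> 0"
    then have "0 < p$k" using Delta_component_bounds(1)[OF pD, of k] by simp
    then have "p$k \<le> x$k" unfolding p_def proj_def
      by (intro closest_point_Delta_component_le[where h=h and a=a and z=x and k=k])
        (use Delta_nonempty assms in auto)
    then show False using \<open>0 < p$k\<close> assms(3) by simp
  qed
  have "0 \<le> muLam canon_lam p (B s) $ k"
    by (rule muLam_nth_nonneg[where lam=canon_lam and u="B s", OF pD B_rate_matrix pk])
  then show ?thesis unfolding G_def F_def Fvf_def p_def[symmetric] using pk by simp
qed

lemma sol_nth_nonneg:
  assumes nD: "\<nu> \<in> Delta h a" shows "0 \<le> sol \<nu> t $ k"
proof (cases "t \<le> 0")
  case True then show ?thesis using Delta_component_bounds(1)[OF nD] by (simp add: sol_nonpos)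
next
  case False
  show ?thesis
  proof (rule integral_equation_nonneg[where z="\<lambda>s. sol \<nu> s $ k" and g="\<lambda>s. G (sol \<nu> s) s $ k"])
    show "continuous_on {0..t} (\<lambda>s. sol \<nu> s $ k)"
      by (intro continuous_on_component continuous_on_subset[OF continuous_on_sol]) auto
    show "0 \<le> sol \<nu> 0 $ k" using Delta_component_bounds(1)[OF nD] by (simp add: sol_nonpos)
    show "((\<lambda>s. G (sol \<nu> s) s $ k) has_integral (sol \<nu> s $ k - sol \<nu> 0 $ k)) {0..s}"
      if "s \<in> {0..t}" for s
      using has_integral_vec_nth[OF sol_integral_equation_G, of s \<nu> k] that by (simp add: sol_nonpos)
    show "0 \<le> G (sol \<nu> s) s $ k" if "s \<in> {0..t}" "sol \<nu> s $ k < 0" for s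
      using that(2) by (intro G_nth_nonneg sum_sol_eq_1[OF nD] sol_off_fibre[OF nD])
  qed (use False in auto)
qed

lemma sol_in_Delta: "\<nu> \<in> Delta h a \<Longrightarrow> sol \<nu> t \<in> Delta h a"
  using sol_nth_nonneg sum_sol_eq_1 sol_off_fibre by (simp add: Delta_def)

lemma sol_integral_equation:
  assumes "\<nu> \<in> Delta h a" "0 \<le> t"
  shows "((\<lambda>s. F (sol \<nu> s) s) has_integral (sol \<nu> t - \<nu>)) {0..t}"
  using sol_integral_equation_G[OF assms(2), of \<nu>]
  by (simp add: G_def proj_id[OF sol_in_Delta[OF assms(1)]])


subsection \<open>Uniqueness and Lipschitz dependence on the initial law\<close>

lemma sol_unique:
  assumes nD: "\<nu> \<in> Delta h a" and zneg: "\<forall>t<0. z t = \<nu>"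
    and zeq: "\<forall>t\<ge>0. ((\<lambda>s. F (z s) s) has_integral (z t - \<nu>)) {0..t}"
  shows "z = sol \<nu>"
proof
  fix T :: real
  show "z T = sol \<nu> T"
  proof (cases "T < 0")
    case True then show ?thesis using zneg by (simp add: sol_nonpos)
  next
    case False
    then have T0: "0 \<le> T" by simp
    have zc: "continuous_on {0..T} z"
    proof -
      have "(\<lambda>s. F (z s) s) integrable_on {0..T}" using zeq T0 by blast
      then have "continuous_on {0..T} (\<lambda>s. \<nu> + integral {0..s} (\<lambda>s. F (z s) s))"
        by (intro continuous_intros indefinite_integral_continuous_1)
      moreover have "\<nu> + integral {0..s} (\<lambda>s. F (z s) s) = z s" if "s \<in> {0..T}" for s
        using integral_unique[OF zeq[rule_format, of s]] that by simp
      ultimately show ?thesis by (rule continuous_on_eq)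
    qed
    obtain R where R: "0 \<le> R" "\<And>s i. s \<in> {0..T} \<Longrightarrow> \<bar>z s $ i\<bar> \<le> R"
    proof -
      obtain R0 where R0: "\<forall>x\<in>z ` {0..T}. norm x \<le> R0"
        using compact_imp_bounded[OF compact_continuous_image[OF zc compact_Icc]]
        unfolding bounded_iff by blast
      have "\<bar>z s $ i\<bar> \<le> max R0 0" if "s \<in> {0..T}" for s i
      proof -
        have "norm (z s) \<le> R0" using R0 that by auto
        then show ?thesis using component_le_norm_cart[of "z s" i] by linarith
      qed
      then show ?thesis by (intro that[of "max R0 0"]) auto
    qed
    define g where "g s = norm (z s - sol \<nu> s)" for s
    have gc: "continuous_on {0..T} g"
      unfolding g_def by (intro continuous_intros zc continuous_on_subset[OF continuous_on_sol]) auto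
    define K where "K = cF * (R + 1)"
    have "g s \<le> K * integral {0..s} g" if s: "s \<in> {0..T}" for s
    proof -
      have hz: "((\<lambda>r. F (z r) r) has_integral (z s - \<nu>)) {0..s}" using zeq s by auto
      have hs: "((\<lambda>r. F (sol \<nu> r) r) has_integral (sol \<nu> s - \<nu>)) {0..s}"
        by (rule sol_integral_equation[OF nD]) (use s in auto)
      have "g s = norm (integral {0..s} (\<lambda>r. F (z r) r - F (sol \<nu> r) r))"
        using integral_unique[OF has_integral_diff[OF hz hs]] by (simp add: g_def)
      also have "\<dots> \<le> integral {0..s} (\<lambda>r. K * g r)"
      proof (rule integral_norm_bound_integral)
        show "(\<lambda>r. F (z r) r - F (sol \<nu> r) r) integrable_on {0..s}"
          using hz hs by (intro integrable_diff) auto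
        show "(\<lambda>r. K * g r) integrable_on {0..s}"
          by (intro integrable_continuous_interval continuous_intros continuous_on_subset[OF gc]) (use s in auto)
        fix r assume "r \<in> {0..s}"
        then show "norm (F (z r) r - F (sol \<nu> r) r) \<le> K * g r"
          unfolding g_def K_def
          by (intro F_lipschitz) (use R s Delta_component_bounds(3)[OF sol_in_Delta[OF nD]] in auto)
      qed
      finally show ?thesis by simp
    qed
    then have "g T = 0"
      by (intro gronwall_integral_zero[OF gc, where L=K]) (use T0 cF_pos R in \<open>auto simp: g_def K_def\<close>)
    then show ?thesis by (simp add: g_def)
  qed
qed

lemma phi_eq_sol: assumes "\<nu> \<in> Delta h a" shows "phi canon_lam h a B \<nu> = sol \<nu>"
  unfolding phi_def
proof (rule the_equality)
  show "(\<forall>t<0. sol \<nu> t = \<nu>) \<and>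
      (\<forall>t\<ge>0. ((\<lambda>s. Fvf canon_lam h a (sol \<nu> s) (B s)) has_integral sol \<nu> t - \<nu>) {0..t})"
    using sol_integral_equation[OF assms] by (simp add: sol_nonpos F_def)
qed (use sol_unique[OF assms] in \<open>auto simp: F_def\<close>)

lemma norm_sol_diff_le:
  assumes nD: "\<nu> \<in> Delta h a" and rD: "\<rho> \<in> Delta h a" and t: "0 \<le> t"
  shows "norm (sol \<nu> t - sol \<rho> t) \<le> norm (\<nu> - \<rho>) * exp (2 * cF * t)"
proof -
  define g where "g s = norm (sol \<nu> s - sol \<rho> s)" for s
  have gc: "continuous_on {0..t} g"
    unfolding g_def by (intro continuous_intros continuous_on_subset[OF continuous_on_sol]) auto
  have "g s \<le> norm (\<nu> - \<rho>) + 2 * cF * integral {0..s} g" if s: "s \<in> {0..t}" for s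
  proof -
    have hn: "((\<lambda>r. F (sol \<nu> r) r) has_integral (sol \<nu> s - \<nu>)) {0..s}"
      by (rule sol_integral_equation[OF nD]) (use s in auto)
    have hr: "((\<lambda>r. F (sol \<rho> r) r) has_integral (sol \<rho> s - \<rho>)) {0..s}"
      by (rule sol_integral_equation[OF rD]) (use s in auto)
    have "sol \<nu> s - sol \<rho> s = (\<nu> - \<rho>) + integral {0..s} (\<lambda>r. F (sol \<nu> r) r - F (sol \<rho> r) r)"
      using integral_unique[OF has_integral_diff[OF hn hr]] by (simp add: algebra_simps)
    then have "g s = norm ((\<nu> - \<rho>) + integral {0..s} (\<lambda>r. F (sol \<nu> r) r - F (sol \<rho> r) r))"
      by (simp add: g_def)
    also have "\<dots> \<le> norm (\<nu> - \<rho>) + norm (integral {0..s} (\<lambda>r. F (sol \<nu> r) r - F (sol \<rho> r) r))"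
      by (rule norm_triangle_ineq)
    also have "norm (integral {0..s} (\<lambda>r. F (sol \<nu> r) r - F (sol \<rho> r) r)) \<le> integral {0..s} (\<lambda>r. 2 * cF * g r)"
    proof (rule integral_norm_bound_integral)
      show "(\<lambda>r. F (sol \<nu> r) r - F (sol \<rho> r) r) integrable_on {0..s}"
        using hn hr by (intro integrable_diff) auto
      show "(\<lambda>r. 2 * cF * g r) integrable_on {0..s}"
        by (intro integrable_continuous_interval continuous_intros continuous_on_subset[OF gc]) (use s in auto)
    qed (unfold g_def, rule F_lipschitz_Delta[OF sol_in_Delta[OF nD] sol_in_Delta[OF rD]])
    finally show ?thesis by simp
  qed
  then have "g t \<le> norm (\<nu> - \<rho>) * exp (2 * cF * t)"
    by (intro gronwall_integral[OF gc]) (use t cF_pos in auto)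
  then show ?thesis by (simp add: g_def)
qed


definition "rate \<nu> s = rr canon_lam h a (sol \<nu> s) (B s)"

lemma rate_nonneg: "\<nu> \<in> Delta h a \<Longrightarrow> 0 \<le> rate \<nu> s"
  unfolding rate_def by (rule rr_nonneg[where lam=canon_lam and u="B s", OF sol_in_Delta B_rate_matrix])

lemma abs_rate_diff_le: "\<bar>rate \<nu> s - rate \<rho> s\<bar> \<le> cR * norm (sol \<nu> s - sol \<rho> s)"
proof -
  have "\<bar>muLam1 canon_lam h (sol \<nu> s - sol \<rho> s) (B s) a\<bar> \<le> cR * norm (sol \<nu> s - sol \<rho> s)"
    unfolding cR_def
    by (rule abs_muLam1_le[where lam=canon_lam and u="B s", OF B_bounded component_le_norm_cart Lm_nonneg norm_ge_zero])
  then show ?thesis by (simp add: rate_def rr_def muLam1_diff abs_minus_commute)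
qed

lemma rate_integrable: assumes "\<nu> \<in> Delta h a" shows "rate \<nu> integrable_on {c..d}"
proof (rule integrable_on_Icc_if_bounded_measurable)
  show "rate \<nu> \<in> borel_measurable lebesgue"
    using borel_measurable_continuous_on[OF continuous_on_rr_canon borel_measurable_Pair[OF sol_measurable B_measurable]]
    by (simp add: rate_def[abs_def])
  have "\<bar>muLam1 canon_lam h (sol \<nu> s) (B s) a\<bar> \<le> cR * 1" for s
    unfolding cR_def
    by (rule abs_muLam1_le[where lam=canon_lam and u="B s", OF B_bounded Delta_component_bounds(3)[OF sol_in_Delta[OF assms]] Lm_nonneg])
      simp
  then show "norm (rate \<nu> s) \<le> cR" for s by (simp add: rate_def rr_def)
qed

lemma chi_eq: assumes "\<nu> \<in> Delta h a"
  shows "chi canon_lam h a B \<nu> t = exp (- integral {0..t} (rate \<nu>))"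
  by (simp add: chi_def phi_eq_sol[OF assms] rate_def[abs_def])

lemma continuous_on_chi: assumes "\<nu> \<in> Delta h a" shows "continuous_on UNIV (chi canon_lam h a B \<nu>)"
proof -
  have "continuous_on UNIV (\<lambda>t. 0 + integral {0..t} (rate \<nu>))"
    by (rule continuous_on_integral_from_0[OF rate_integrable[OF assms]])
  then have "continuous_on UNIV (\<lambda>t. exp (- integral {0..t} (rate \<nu>)))" by (intro continuous_intros) simp
  then show ?thesis by (simp add: chi_eq[OF assms])
qed

lemma integral_rate_nonneg: assumes "\<nu> \<in> Delta h a" shows "0 \<le> integral {0..t} (rate \<nu>)"
  by (rule integral_nonneg[OF rate_integrable[OF assms]]) (rule rate_nonneg[OF assms])

lemma chi_in_unit_interval: assumes "\<nu> \<in> Delta h a" shows "chi canon_lam h a B \<nu> t \<in> {0..1}"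
  using integral_rate_nonneg[OF assms, of t] by (simp add: chi_eq[OF assms])

lemma abs_chi_diff_le:
  assumes nD: "\<nu> \<in> Delta h a" and rD: "\<rho> \<in> Delta h a" and t: "t \<in> {0..T}"
  shows "\<bar>chi canon_lam h a B \<nu> t - chi canon_lam h a B \<rho> t\<bar> \<le> cR * T * exp (2 * cF * T) * norm (\<nu> - \<rho>)"
proof -
  have "\<bar>chi canon_lam h a B \<nu> t - chi canon_lam h a B \<rho> t\<bar> \<le> \<bar>integral {0..t} (rate \<nu>) - integral {0..t} (rate \<rho>)\<bar>"
    unfolding chi_eq[OF nD] chi_eq[OF rD]
    by (rule exp_minus_abs_diff_le[OF integral_rate_nonneg[OF nD] integral_rate_nonneg[OF rD]])
  also have "\<dots> = norm (integral {0..t} (\<lambda>s. rate \<nu> s - rate \<rho> s))"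
    by (simp add: integral_diff[OF rate_integrable[OF nD] rate_integrable[OF rD]])
  also have "\<dots> \<le> integral {0..t} (\<lambda>_. cR * exp (2 * cF * T) * norm (\<nu> - \<rho>))"
  proof (rule integral_norm_bound_integral)
    show "(\<lambda>s. rate \<nu> s - rate \<rho> s) integrable_on {0..t}" by (intro integrable_diff rate_integrable nD rD)
    fix s assume s: "s \<in> {0..t}"
    have "\<bar>rate \<nu> s - rate \<rho> s\<bar> \<le> cR * norm (sol \<nu> s - sol \<rho> s)" by (rule abs_rate_diff_le)
    also have "\<dots> \<le> cR * (norm (\<nu> - \<rho>) * exp (2 * cF * s))"
      using s Lm_nonneg by (intro mult_left_mono norm_sol_diff_le nD rD) (auto simp: cR_def)
    also have "\<dots> \<le> cR * (norm (\<nu> - \<rho>) * exp (2 * cF * T))"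
      using s t cF_pos Lm_nonneg by (intro mult_left_mono) (auto simp: cR_def)
    finally show "norm (rate \<nu> s - rate \<rho> s) \<le> cR * exp (2 * cF * T) * norm (\<nu> - \<rho>)"
      by (simp add: algebra_simps)
  qed (rule integrable_const_ivl)
  also have "\<dots> = t * (cR * exp (2 * cF * T) * norm (\<nu> - \<rho>))" using t by simp
  also have "\<dots> \<le> T * (cR * exp (2 * cF * T) * norm (\<nu> - \<rho>))"
    using t Lm_nonneg by (intro mult_right_mono) (auto simp: cR_def)
  finally show ?thesis by (simp add: algebra_simps)
qed

lemma dist_state_le:
  assumes nD: "\<nu> \<in> Delta h a" and rD: "\<rho> \<in> Delta h a" and t: "t \<in> {0..T}"
  shows "dist (sol \<nu> t, chi canon_lam h a B \<nu> t, B t) (sol \<rho> t, chi canon_lam h a B \<rho> t, B t)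
    \<le> exp (2 * cF * T) * (1 + cR * T) * norm (\<nu> - \<rho>)"
proof -
  have "dist (sol \<nu> t, chi canon_lam h a B \<nu> t, B t) (sol \<rho> t, chi canon_lam h a B \<rho> t, B t)
      \<le> norm (sol \<nu> t - sol \<rho> t) + \<bar>chi canon_lam h a B \<nu> t - chi canon_lam h a B \<rho> t\<bar>"
    using norm_Pair_le[of "sol \<nu> t - sol \<rho> t" "(chi canon_lam h a B \<nu> t - chi canon_lam h a B \<rho> t, 0::(real^'i^'i) \<times> (real^'i))"]
      norm_Pair_le[of "chi canon_lam h a B \<nu> t - chi canon_lam h a B \<rho> t" "0::(real^'i^'i) \<times> (real^'i)"]
    by (simp add: dist_norm)
  also have "norm (sol \<nu> t - sol \<rho> t) \<le> exp (2 * cF * T) * norm (\<nu> - \<rho>)"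
  proof -
    have "norm (sol \<nu> t - sol \<rho> t) \<le> norm (\<nu> - \<rho>) * exp (2 * cF * t)"
      using t by (intro norm_sol_diff_le nD rD) auto
    also have "\<dots> \<le> norm (\<nu> - \<rho>) * exp (2 * cF * T)"
      using t cF_pos by (intro mult_left_mono) auto
    finally show ?thesis by (simp add: mult.commute)
  qed
  finally show ?thesis using abs_chi_diff_le[OF nD rD t] by (simp add: algebra_simps)
qed

end


section \<open>The running cost and uniform estimates for \<open>J\<close>\<close>

lemma tendsto_Hb:
  fixes Y :: "'x \<Rightarrow> real^'i::finite"
  assumes Y: "(Y \<longlongrightarrow> y) F" and pos: "0 < (\<Sum>i\<in>{i. h i = b}. y$i)"
  shows "((\<lambda>x. Hb h nu0 b (Y x)) \<longlongrightarrow> Hb h nu0 b y) F"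
proof -
  define N where "N z = (\<chi> i. if h i = b then z$i / (\<Sum>k\<in>{k. h k = b}. z$k) else 0)" for z :: "real^'i"
  have Yi: "((\<lambda>x. Y x $ k) \<longlongrightarrow> y $ k) F" for k by (rule tendsto_vec_nth[OF Y])
  have mass: "((\<lambda>x. \<Sum>k\<in>{k. h k = b}. Y x $ k) \<longlongrightarrow> (\<Sum>k\<in>{k. h k = b}. y $ k)) F"
    by (intro tendsto_sum Yi)
  have "((\<lambda>x. N (Y x)) \<longlongrightarrow> N y) F"
    unfolding N_def
  proof (intro tendsto_vec_lambda)
    fix i
    show "((\<lambda>x. if h i = b then Y x $ i / (\<Sum>k\<in>{k. h k = b}. Y x $ k) else 0)
        \<longlongrightarrow> (if h i = b then y $ i / (\<Sum>k\<in>{k. h k = b}. y $ k) else 0)) F"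
    proof (cases "h i = b")
      case True then show ?thesis using tendsto_divide[OF Yi mass] pos by simp
    qed simp
  qed
  moreover have "\<forall>\<^sub>F x in F. N (Y x) = Hb h nu0 b (Y x)"
    using order_tendstoD(1)[OF mass pos] by eventually_elim (auto simp: Hb_def N_def)
  moreover have "N y = Hb h nu0 b y" using pos by (simp add: Hb_def N_def)
  ultimately show ?thesis by (auto intro: Lim_transform_eventually)
qed

text \<open>The jump of \<open>H\<^sub>b\<close> where the mass of the fibre \<open>h\<^sup>-\<^sup>1(b)\<close> vanishes is killed by that mass.\<close>

lemma continuous_on_w_Hb_mult_mass:
  fixes Y :: "'x::metric_space \<Rightarrow> real^'i::finite" and h :: "'i \<Rightarrow> 'o::finite"
  assumes Yc: "continuous_on K Y" and Yn: "\<And>x j. x \<in> K \<Longrightarrow> h j = b \<Longrightarrow> 0 \<le> Y x $ j"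
    and wc: "continuous_on (Delta_e h) w" and n0: "nu0 b \<in> Delta h b"
    and wb: "\<And>p. p \<in> Delta_e h \<Longrightarrow> \<bar>w p\<bar> \<le> Wm"
  shows "continuous_on K (\<lambda>x. w (Hb h nu0 b (Y x)) * (\<Sum>j\<in>{j. h j = b}. Y x $ j))"
proof -
  define S where "S x = (\<Sum>j\<in>{j. h j = b}. Y x $ j)" for x
  have S0: "0 \<le> S x" if "x \<in> K" for x unfolding S_def by (rule sum_nonneg) (use Yn that in auto)
  have HD: "Hb h nu0 b (Y x) \<in> Delta_e h" if "x \<in> K" for x
  proof -
    have "Hb h nu0 b (Y x) \<in> Delta h b" by (rule Hb_in_Delta) (use Yn that n0 in auto)
    then show ?thesis by (rule subsetD[OF Delta_subset_Delta_e])
  qed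
  have "((\<lambda>x. w (Hb h nu0 b (Y x)) * S x) \<longlongrightarrow> w (Hb h nu0 b (Y x0)) * S x0) (at x0 within K)"
    if x0: "x0 \<in> K" for x0
  proof -
    have Yt: "(Y \<longlongrightarrow> Y x0) (at x0 within K)" using Yc x0 by (simp add: continuous_on_def)
    have St: "(S \<longlongrightarrow> S x0) (at x0 within K)"
      unfolding S_def by (intro tendsto_sum tendsto_vec_nth Yt)
    have in_K: "\<forall>\<^sub>F x in at x0 within K. x \<in> K"
      by (simp add: eventually_at_filter)
    show ?thesis
    proof (cases "S x0 = 0")
      case True
      have "((\<lambda>x. w (Hb h nu0 b (Y x)) * S x) \<longlongrightarrow> 0) (at x0 within K)"
      proof (rule Lim_null_comparison)
        show "\<forall>\<^sub>F x in at x0 within K. norm (w (Hb h nu0 b (Y x)) * S x) \<le> Wm * S x"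
          using in_K
        proof eventually_elim
          case (elim x)
          have "\<bar>w (Hb h nu0 b (Y x))\<bar> * \<bar>S x\<bar> \<le> Wm * \<bar>S x\<bar>" using wb[OF HD[OF elim]] by (intro mult_right_mono) simp_all
          then show ?case using S0[OF elim] by (simp add: abs_mult)
        qed
        show "((\<lambda>x. Wm * S x) \<longlongrightarrow> 0) (at x0 within K)"
          using tendsto_mult_left[OF St, of Wm] True by simp
      qed
      then show ?thesis using True by simp
    next
      case False
      then have pos: "0 < S x0" using S0[OF x0] by simp
      have "continuous (at (Hb h nu0 b (Y x0)) within Delta_e h) w"
        using wc HD[OF x0] by (simp add: continuous_on_eq_continuous_within)
      moreover have "\<forall>\<^sub>F x in at x0 within K. Hb h nu0 b (Y x) \<in> Delta_e h"
        using in_K by eventually_elim (rule HD)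
      ultimately have "((\<lambda>x. w (Hb h nu0 b (Y x))) \<longlongrightarrow> w (Hb h nu0 b (Y x0))) (at x0 within K)"
        using tendsto_Hb[OF Yt pos[unfolded S_def]] by (rule continuous_within_tendsto_compose)
      then show ?thesis by (intro tendsto_mult St)
    qed
  qed
  then show ?thesis by (simp add: continuous_on_def S_def)
qed

text \<open>\<open>L\<close> with \<open>r(\<rho>,u) q(\<rho>,u,b)\<close> multiplied out to \<open>\<rho> \<Lambda>(u) 1_{h^-1(b)}\<close>, as a function of
  \<open>(\<rho>, s, (\<Lambda>(u), f(u)))\<close>; unlike \<open>L\<close> it is continuous.\<close>

definition L_cont :: "('i::finite \<Rightarrow> 'o::finite) \<Rightarrow> ('o \<Rightarrow> real^'i) \<Rightarrow> (real^'i \<Rightarrow> real) \<Rightarrow> 'o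
    \<Rightarrow> (real^'i) \<times> real \<times> ((real^'i^'i) \<times> (real^'i)) \<Rightarrow> real" where
  "L_cont h nu0 w a x = fst (snd x) * ((\<Sum>i\<in>UNIV. fst x $ i * canon_f i (snd (snd x))) +
     (\<Sum>b\<in>UNIV. if b = a then 0
        else w (Hb h nu0 b (muLam canon_lam (fst x) (snd (snd x)))) * muLam1 canon_lam h (fst x) (snd (snd x)) b))"

lemma LL_eq_L_cont:
  fixes h :: "'i::finite \<Rightarrow> 'o::finite"
  assumes pD: "p \<in> Delta h a" and g: "rate_matrix (canon_lam u)"
  shows "LL canon_lam canon_f h nu0 qd a p c u w = L_cont h nu0 w a (p, c, u)"
proof -
  let ?m = "\<lambda>b. muLam1 canon_lam h p u b"
  let ?W = "\<lambda>b. w (Hb h nu0 b (muLam canon_lam p u))"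
  have "rr canon_lam h a p u * intR canon_lam h nu0 qd a p u w = (\<Sum>b\<in>UNIV. if b = a then 0 else ?W b * ?m b)"
  proof (cases "?m a = 0")
    case False
    have "rr canon_lam h a p u * intR canon_lam h nu0 qd a p u w = (\<Sum>b\<in>UNIV. (- ?m a) * (?W b * qq canon_lam h qd a p u b))"
      unfolding intR_def rr_def by (simp add: sum_distrib_left)
    also have "\<dots> = (\<Sum>b\<in>UNIV. if b = a then 0 else ?W b * ?m b)"
      by (rule sum.cong) (use False in \<open>auto simp: qq_def\<close>)
    finally show ?thesis .
  next
    case True
    then have "(\<Sum>b\<in>UNIV - {a}. ?m b) = 0"
      using rr_eq_sum_muLam1[where lam=canon_lam and u=u, OF g, of h a p] by (simp add: rr_def)
    then have "\<forall>b\<in>UNIV - {a}. ?m b = 0"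
      by (subst sum_nonneg_eq_0_iff[symmetric]) (auto intro: muLam1_nonneg[where lam=canon_lam and u=u, OF pD g])
    then show ?thesis using True by (auto simp: rr_def intro!: sum.neutral)
  qed
  then show ?thesis unfolding LL_def L_cont_def fst_conv snd_conv by simp
qed

locale running_cost =
  fixes h :: "'i::finite \<Rightarrow> 'o::finite" and UE :: "((real^'i^'i) \<times> (real^'i)) set"
    and w :: "real^'i \<Rightarrow> real" and nu0 :: "'o \<Rightarrow> real^'i" and Lm :: real
  assumes compact_UE: "compact UE" and Lm_nonneg: "0 \<le> Lm"
    and UE_rate_matrix: "\<And>u. u \<in> UE \<Longrightarrow> rate_matrix (canon_lam u)"
    and UE_bounded: "\<And>u i j. u \<in> UE \<Longrightarrow> \<bar>canon_lam u i j\<bar> \<le> Lm"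
    and w_cont: "continuous_on (Delta_e h) w"
    and nu0_in: "\<And>b. nu0 b \<in> Delta h b"
begin

definition "states a = Delta h a \<times> ({0..1::real} \<times> UE)"

lemma compact_states: "compact (states a)"
  unfolding states_def by (intro compact_Times compact_Delta compact_Icc compact_UE)

lemma continuous_on_L_cont: "continuous_on (states a) (L_cont h nu0 w a)"
proof -
  obtain Wm where Wm: "\<And>p. p \<in> Delta_e h \<Longrightarrow> \<bar>w p\<bar> \<le> Wm"
    using compact_imp_bounded[OF compact_continuous_image[OF w_cont compact_Delta_e]]
    unfolding bounded_iff by auto
  have Yc: "continuous_on (states a) (\<lambda>x. muLam canon_lam (fst x) (snd (snd x)))"
    unfolding muLam_def canon_lam_def by (intro continuous_on_vec_lambda continuous_intros)
  have "continuous_on (states a) (\<lambda>x. if b = a then 0 else w (Hb h nu0 b (muLam canon_lam (fst x) (snd (snd x)))) *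
      muLam1 canon_lam h (fst x) (snd (snd x)) b)" for b
  proof (cases "b = a")
    case False
    have "continuous_on (states a) (\<lambda>x. w (Hb h nu0 b (muLam canon_lam (fst x) (snd (snd x)))) *
        (\<Sum>j\<in>{j. h j = b}. muLam canon_lam (fst x) (snd (snd x)) $ j))"
    proof (rule continuous_on_w_Hb_mult_mass[OF Yc _ w_cont nu0_in Wm])
      fix x j assume "x \<in> states a" "h j = b"
      then show "0 \<le> muLam canon_lam (fst x) (snd (snd x)) $ j"
        using False UE_rate_matrix by (intro muLam_nth_nonneg[where h=h and a=a]) (auto simp: states_def Delta_def)
    qed
    then show ?thesis using False by (simp add: muLam1_eq_sum_muLam)
  qed simp
  then show ?thesis unfolding L_cont_def canon_f_def
    by (intro continuous_intros)
qed

lemma L_cont_bounded: obtains M where "\<And>a x. x \<in> states a \<Longrightarrow> \<bar>L_cont h nu0 w a x\<bar> \<le> M"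
proof -
  have "\<exists>M. \<forall>x\<in>states a. \<bar>L_cont h nu0 w a x\<bar> \<le> M" for a
    using compact_imp_bounded[OF compact_continuous_image[OF continuous_on_L_cont compact_states]]
    unfolding bounded_iff by auto
  then obtain Mf where Mf: "\<And>a x. x \<in> states a \<Longrightarrow> \<bar>L_cont h nu0 w a x\<bar> \<le> Mf a" by metis
  have "Mf a \<le> Max (range Mf)" for a by (rule Max_ge) auto
  then show ?thesis using that Mf by (meson order_trans)
qed

lemma L_cont_uniformly_continuous:
  assumes "0 < e"
  obtains d where "0 < d"
    "\<And>a x y. x \<in> states a \<Longrightarrow> y \<in> states a \<Longrightarrow> dist x y < d \<Longrightarrow> \<bar>L_cont h nu0 w a x - L_cont h nu0 w a y\<bar> < e"
proof -
  have "\<exists>d>0. \<forall>x\<in>states a. \<forall>y\<in>states a. dist x y < d \<longrightarrow> \<bar>L_cont h nu0 w a x - L_cont h nu0 w a y\<bar> < e" for a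
  proof -
    have "uniformly_continuous_on (states a) (L_cont h nu0 w a)"
      by (rule compact_uniformly_continuous[OF continuous_on_L_cont compact_states])
    then show ?thesis
      unfolding uniformly_continuous_on_def using assms by (metis dist_commute dist_real_def)
  qed
  then obtain df where df: "\<And>a. 0 < df a"
    "\<And>a x y. x \<in> states a \<Longrightarrow> y \<in> states a \<Longrightarrow> dist x y < df a \<Longrightarrow> \<bar>L_cont h nu0 w a x - L_cont h nu0 w a y\<bar> < e"
    by metis
  have "0 < Min (range df)" using df(1) by (subst Min_gr_iff) auto
  moreover have "Min (range df) \<le> df a" for a by (rule Min_le) auto
  ultimately show ?thesis using that df(2) by (meson less_le_trans)
qed

definition "controls = {B. B \<in> borel_measurable lebesgue \<and> (\<forall>s. B s \<in> UE)}"

end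

locale controlled_cost = running_cost h UE w nu0 Lm + controlled_flow h a B Lm
  for h :: "'i::finite \<Rightarrow> 'o::finite" and UE w nu0 Lm a B +
  assumes B_in_UE: "\<And>s. B s \<in> UE"
begin

lemma state_in_states: "\<nu> \<in> Delta h a \<Longrightarrow> (sol \<nu> t, chi canon_lam h a B \<nu> t, B t) \<in> states a"
  using chi_in_unit_interval by (simp add: states_def sol_in_Delta B_in_UE)

definition "cost \<beta> \<nu> t = exp (- \<beta> * t) * L_cont h nu0 w a (sol \<nu> t, chi canon_lam h a B \<nu> t, B t)"

lemma JJ_eq_integral_cost:
  assumes "\<nu> \<in> Delta h a"
  shows "JJ canon_lam canon_f h nu0 qd \<beta> T w a \<nu> B = integral {0..T} (cost \<beta> \<nu>)"
  unfolding JJ_def cost_def phi_eq_sol[OF assms]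
  by (simp add: LL_eq_L_cont[OF sol_in_Delta[OF assms] B_rate_matrix])

lemma abs_cost_le:
  assumes "0 \<le> \<beta>" "0 \<le> t" "\<nu> \<in> Delta h a" "\<And>x. x \<in> states a \<Longrightarrow> \<bar>L_cont h nu0 w a x\<bar> \<le> M"
  shows "\<bar>cost \<beta> \<nu> t\<bar> \<le> M"
proof -
  have "exp (- \<beta> * t) * \<bar>L_cont h nu0 w a (sol \<nu> t, chi canon_lam h a B \<nu> t, B t)\<bar> \<le> 1 * M"
    using assms state_in_states by (intro mult_mono) auto
  then show ?thesis by (simp add: cost_def abs_mult)
qed

lemma cost_integrable:
  assumes "0 \<le> \<beta>" "\<nu> \<in> Delta h a"
  shows "cost \<beta> \<nu> integrable_on {0..T}"
proof -
  obtain M where M: "\<And>a x. x \<in> states a \<Longrightarrow> \<bar>L_cont h nu0 w a x\<bar> \<le> M"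
    using L_cont_bounded by blast
  have "(\<lambda>t. (sol \<nu> t, chi canon_lam h a B \<nu> t, B t)) \<in> borel_measurable lebesgue"
    by (intro borel_measurable_Pair sol_measurable B_measurable continuous_imp_borel_measurable_lebesgue
        continuous_on_chi assms(2))
  then have "(\<lambda>t. L_cont h nu0 w a (sol \<nu> t, chi canon_lam h a B \<nu> t, B t)) \<in> borel_measurable lebesgue"
    by (rule borel_measurable_continuous_on_comp[OF continuous_on_L_cont state_in_states[OF assms(2)], rotated])
  moreover have "(\<lambda>t. exp (- \<beta> * t)) \<in> borel_measurable lebesgue"
    by (intro continuous_imp_borel_measurable_lebesgue continuous_intros)
  ultimately have "cost \<beta> \<nu> \<in> borel_measurable lebesgue"
    unfolding cost_def[abs_def] by (rule borel_measurable_times[rotated])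
  then show ?thesis
    by (rule integrable_on_Icc_if_bounded_measurable) (use abs_cost_le[OF assms(1) _ assms(2) M] in auto)
qed

lemma abs_JJ_le:
  assumes "0 \<le> \<beta>" "0 \<le> T" "\<nu> \<in> Delta h a" "\<And>x. x \<in> states a \<Longrightarrow> \<bar>L_cont h nu0 w a x\<bar> \<le> M"
  shows "\<bar>JJ canon_lam canon_f h nu0 qd \<beta> T w a \<nu> B\<bar> \<le> T * M"
proof -
  have "norm (integral {0..T} (cost \<beta> \<nu>)) \<le> integral {0..T} (\<lambda>_. M)"
    by (rule integral_norm_bound_integral[OF cost_integrable[OF assms(1,3)] integrable_const_ivl])
      (use abs_cost_le[OF assms(1) _ assms(3,4)] in auto)
  then show ?thesis using assms(2) by (simp add: JJ_eq_integral_cost[OF assms(3)])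
qed

lemma abs_JJ_diff_le:
  assumes "0 \<le> \<beta>" "0 \<le> T" and nD: "\<nu> \<in> Delta h a" and rD: "\<rho> \<in> Delta h a"
    and d: "\<And>x y. x \<in> states a \<Longrightarrow> y \<in> states a \<Longrightarrow> dist x y < d \<Longrightarrow> \<bar>L_cont h nu0 w a x - L_cont h nu0 w a y\<bar> < e"
    and close: "exp (2 * cF * T) * (1 + cR * T) * norm (\<nu> - \<rho>) < d"
  shows "\<bar>JJ canon_lam canon_f h nu0 qd \<beta> T w a \<nu> B - JJ canon_lam canon_f h nu0 qd \<beta> T w a \<rho> B\<bar> \<le> T * e"
proof -
  have "norm (integral {0..T} (\<lambda>t. cost \<beta> \<nu> t - cost \<beta> \<rho> t)) \<le> integral {0..T} (\<lambda>_. e)"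
  proof (rule integral_norm_bound_integral)
    show "(\<lambda>t. cost \<beta> \<nu> t - cost \<beta> \<rho> t) integrable_on {0..T}"
      by (intro integrable_diff cost_integrable assms(1) nD rD)
    fix t assume t: "t \<in> {0..T}"
    have "\<bar>L_cont h nu0 w a (sol \<nu> t, chi canon_lam h a B \<nu> t, B t) - L_cont h nu0 w a (sol \<rho> t, chi canon_lam h a B \<rho> t, B t)\<bar> < e"
      using dist_state_le[OF nD rD t] close by (intro d state_in_states nD rD) simp
    then have "exp (- \<beta> * t) * \<bar>L_cont h nu0 w a (sol \<nu> t, chi canon_lam h a B \<nu> t, B t)
        - L_cont h nu0 w a (sol \<rho> t, chi canon_lam h a B \<rho> t, B t)\<bar> \<le> 1 * e"
      using assms(1) t by (intro mult_mono) auto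
    then show "norm (cost \<beta> \<nu> t - cost \<beta> \<rho> t) \<le> e"
      by (simp add: cost_def abs_mult right_diff_distrib[symmetric])
  qed (rule integrable_const_ivl)
  then show ?thesis using assms(2)
    by (simp add: JJ_eq_integral_cost nD rD integral_diff[OF cost_integrable[OF assms(1) nD] cost_integrable[OF assms(1) rD]])
qed

end

context running_cost
begin

lemma controlled_cost_if_control:
  assumes "B \<in> controls" shows "controlled_cost h UE w nu0 Lm a B"
  using assms nu0_in[of a] UE_rate_matrix UE_bounded
  by unfold_locales (auto simp: controls_def)

lemma JJ_bounded:
  assumes "0 \<le> \<beta>" "0 \<le> T"
  obtains M where "\<And>B a \<nu>. B \<in> controls \<Longrightarrow> \<nu> \<in> Delta h a \<Longrightarrow> \<bar>JJ canon_lam canon_f h nu0 qd \<beta> T w a \<nu> B\<bar> \<le> M"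
proof -
  obtain M where M: "\<And>a x. x \<in> states a \<Longrightarrow> \<bar>L_cont h nu0 w a x\<bar> \<le> M"
    using L_cont_bounded by blast
  have "\<bar>JJ canon_lam canon_f h nu0 qd \<beta> T w a \<nu> B\<bar> \<le> T * M" if "B \<in> controls" "\<nu> \<in> Delta h a" for B a \<nu>
  proof -
    interpret controlled_cost h UE w nu0 Lm a B by (rule controlled_cost_if_control[OF that(1)])
    show ?thesis by (rule abs_JJ_le[OF assms that(2) M])
  qed
  then show ?thesis by (rule that)
qed

lemma JJ_uniformly_equicontinuous:
  assumes "0 \<le> \<beta>" "0 \<le> T" "0 < e"
  shows "\<exists>\<delta>>0. \<forall>B\<in>controls. \<forall>a b \<nu> \<rho>. \<nu> \<in> Delta h a \<longrightarrow> \<rho> \<in> Delta h b \<longrightarrow> norm (\<nu> - \<rho>) < \<delta> \<longrightarrow>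
    \<bar>JJ canon_lam canon_f h nu0 qd \<beta> T w a \<nu> B - JJ canon_lam canon_f h nu0 qd \<beta> T w b \<rho> B\<bar> \<le> e"
proof -
  have e': "0 < e / (T + 1)" using assms by simp
  obtain d where d0: "0 < d" and d: "\<And>a x y. x \<in> states a \<Longrightarrow> y \<in> states a \<Longrightarrow> dist x y < d \<Longrightarrow>
      \<bar>L_cont h nu0 w a x - L_cont h nu0 w a y\<bar> < e / (T + 1)"
    using L_cont_uniformly_continuous[OF e'] by blast
  define K where "K = exp (2 * (3 * real CARD('i) ^ 3 * Lm + 1) * T) * (1 + real CARD('i) * real CARD('i) * Lm * T)"
  have K0: "0 \<le> K" unfolding K_def using Lm_nonneg assms(2) by simp
  define \<delta> where "\<delta> = min (1 / real CARD('i)) (d / (K + 1))"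
  have "\<bar>JJ canon_lam canon_f h nu0 qd \<beta> T w a \<nu> B - JJ canon_lam canon_f h nu0 qd \<beta> T w b \<rho> B\<bar> \<le> e"
    if B: "B \<in> controls" and nD: "\<nu> \<in> Delta h a" and rD: "\<rho> \<in> Delta h b" and close: "norm (\<nu> - \<rho>) < \<delta>"
    for B a b \<nu> \<rho>
  proof -
    have "a = b"
    proof (rule ccontr)
      assume "a \<noteq> b"
      then have "1 \<le> real CARD('i) * norm (\<nu> - \<rho>)" by (rule Delta_different_fibres_dist[OF nD rD])
      moreover have "real CARD('i) * norm (\<nu> - \<rho>) < real CARD('i) * (1 / real CARD('i))"
        using close by (intro mult_strict_left_mono) (auto simp: \<delta>_def)
      ultimately show False by simp
    qed
    interpret controlled_cost h UE w nu0 Lm a B by (rule controlled_cost_if_control[OF B])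
    have "exp (2 * cF * T) * (1 + cR * T) * norm (\<nu> - \<rho>) \<le> (K + 1) * norm (\<nu> - \<rho>)"
      by (simp add: K_def cF_def cR_def mult_right_mono)
    also have "\<dots> < (K + 1) * (d / (K + 1))"
      using close K0 by (intro mult_strict_left_mono) (auto simp: \<delta>_def)
    finally have "exp (2 * cF * T) * (1 + cR * T) * norm (\<nu> - \<rho>) < d" using K0 by simp
    then have "\<bar>JJ canon_lam canon_f h nu0 qd \<beta> T w a \<nu> B - JJ canon_lam canon_f h nu0 qd \<beta> T w a \<rho> B\<bar> \<le> T * (e / (T + 1))"
      using \<open>a = b\<close> d by (intro abs_JJ_diff_le assms(1,2) nD) (use rD in auto)
    also have "\<dots> \<le> e" using assms by (simp add: field_simps)
    finally show ?thesis using \<open>a = b\<close> by simp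
  qed
  moreover have "0 < \<delta>" using d0 K0 by (simp add: \<delta>_def)
  ultimately show ?thesis by blast
qed

end


section \<open>Moduli of continuity\<close>

locale affine_family =
  fixes a b :: "nat \<Rightarrow> real"
  assumes a_nonneg: "\<And>k. 0 \<le> a k" and b_nonneg: "\<And>k. 0 \<le> b k" and a_tendsto_0: "a \<longlonglongrightarrow> 0"
begin

definition "\<eta> t = (INF k. a k + b k * t)"

lemma bdd_below_affine: "0 \<le> t \<Longrightarrow> bdd_below (range (\<lambda>k. a k + b k * t))"
  by (rule bdd_belowI[of _ 0]) (use a_nonneg b_nonneg in auto)

lemma \<eta>_le: "0 \<le> t \<Longrightarrow> \<eta> t \<le> a k + b k * t"
  unfolding \<eta>_def by (rule cINF_lower[OF bdd_below_affine]) auto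

lemma \<eta>_nonneg: "0 \<le> t \<Longrightarrow> 0 \<le> \<eta> t"
  unfolding \<eta>_def by (rule cINF_greatest) (use a_nonneg b_nonneg in auto)

lemma \<eta>_mono:
  assumes "0 \<le> s" "s \<le> t" shows "\<eta> s \<le> \<eta> t"
  unfolding \<eta>_def[of t]
proof (rule cINF_greatest)
  show "\<eta> s \<le> a k + b k * t" for k
    using \<eta>_le[OF assms(1), of k] mult_left_mono[OF assms(2) b_nonneg[of k]] by simp
qed simp

lemma \<eta>_subadditive:
  assumes "0 \<le> s" "0 \<le> t" shows "\<eta> (s + t) \<le> \<eta> s + \<eta> t"
proof -
  have key: "\<eta> (s + t) \<le> (a j + b j * s) + (a k + b k * t)" for j k
  proof (cases "b j \<le> b k")
    case True
    have "\<eta> (s + t) \<le> a j + b j * (s + t)" by (rule \<eta>_le) (use assms in auto)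
    also have "\<dots> \<le> (a j + b j * s) + (a k + b k * t)"
      using True a_nonneg[of k] assms mult_left_mono[OF True, of t] by (simp add: algebra_simps)
    finally show ?thesis .
  next
    case False
    have "\<eta> (s + t) \<le> a k + b k * (s + t)" by (rule \<eta>_le) (use assms in auto)
    also have "\<dots> \<le> (a j + b j * s) + (a k + b k * t)"
      using False a_nonneg[of j] assms mult_left_mono[of "b k" "b j" s] by (simp add: algebra_simps)
    finally show ?thesis .
  qed
  have "\<eta> (s + t) - (a k + b k * t) \<le> \<eta> s" for k
    unfolding \<eta>_def[of s] by (rule cINF_greatest) (use key[of _ k] in \<open>auto simp: algebra_simps\<close>)
  then have "\<eta> (s + t) - \<eta> s \<le> \<eta> t"
    unfolding \<eta>_def[of t] by (intro cINF_greatest) (auto simp: algebra_simps)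
  then show ?thesis by simp
qed

lemma \<eta>_small:
  assumes "0 < e" obtains d where "0 < d" "\<And>t. 0 \<le> t \<Longrightarrow> t < d \<Longrightarrow> \<eta> t < e"
proof -
  obtain k where k: "a k < e / 2"
    using order_tendstoD(2)[OF a_tendsto_0, of "e/2"] assms by (auto dest: eventually_happens)
  define d where "d = e / (2 * (b k + 1))"
  have "\<eta> t < e" if "0 \<le> t" "t < d" for t
  proof -
    have "b k * t \<le> b k * d" using that b_nonneg[of k] by (simp add: mult_left_mono)
    also have "\<dots> = e / 2 * (b k / (b k + 1))" unfolding d_def using b_nonneg[of k] by (simp add: field_simps)
    also have "\<dots> \<le> e / 2 * 1" using assms b_nonneg[of k] by (intro mult_left_mono) auto
    finally show ?thesis using \<eta>_le[OF that(1), of k] k by simp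
  qed
  moreover have "0 < d" unfolding d_def using assms b_nonneg[of k] by (simp add: add_nonneg_pos)
  ultimately show ?thesis by (rule that[rotated])
qed

lemma abs_\<eta>_diff_le: "0 \<le> s \<Longrightarrow> 0 \<le> t \<Longrightarrow> \<bar>\<eta> t - \<eta> s\<bar> \<le> \<eta> \<bar>t - s\<bar>"
  using \<eta>_subadditive[of s "t - s"] \<eta>_subadditive[of t "s - t"] \<eta>_mono[of s t] \<eta>_mono[of t s]
  by (cases "s \<le> t") auto

lemma modulus_of_continuity_\<eta>: "modulus_of_continuity \<eta>"
proof -
  have "continuous_on {0..} \<eta>"
    unfolding continuous_on_iff
  proof (intro ballI allI impI)
    fix x e :: real assume x: "x \<in> {0..}" and e: "0 < e"
    obtain d where d: "0 < d" "\<And>t. 0 \<le> t \<Longrightarrow> t < d \<Longrightarrow> \<eta> t < e" using \<eta>_small[OF e] by blast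
    have "dist (\<eta> y) (\<eta> x) < e" if "y \<in> {0..}" "dist y x < d" for y
      using abs_\<eta>_diff_le[of x y] d(2)[of "\<bar>y - x\<bar>"] x that by (auto simp: dist_real_def)
    then show "\<exists>d>0. \<forall>y\<in>{0..}. dist y x < d \<longrightarrow> dist (\<eta> y) (\<eta> x) < e" using d(1) by blast
  qed
  moreover have "(\<eta> \<longlongrightarrow> 0) (at_right 0)"
  proof (rule tendstoI)
    fix e :: real assume "0 < e"
    then obtain d where d: "0 < d" "\<And>t. 0 \<le> t \<Longrightarrow> t < d \<Longrightarrow> \<eta> t < e" using \<eta>_small by blast
    show "\<forall>\<^sub>F t in at_right 0. dist (\<eta> t) 0 < e"
      by (rule eventually_at_rightI[OF _ d(1)]) (use d(2) \<eta>_nonneg in \<open>auto simp: dist_real_def\<close>)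
  qed
  ultimately show ?thesis
    unfolding modulus_of_continuity_def
    using \<eta>_nonneg \<eta>_subadditive by (auto intro!: mono_onI \<eta>_mono)
qed

end

text \<open>For \<open>e = 1 / (k + 1)\<close> with radius \<open>\<delta>\<^sub>k\<close>, the affine function \<open>e + (2 M + 1) t / \<delta>\<^sub>k\<close>
  dominates all oscillations; the modulus is their infimum.\<close>

lemma modulus_of_continuity_if_uniformly_equicontinuous:
  fixes g :: "'c \<Rightarrow> 'x \<Rightarrow> real" and d :: "'x \<Rightarrow> 'x \<Rightarrow> real"
  assumes bounded: "\<And>c x. c \<in> A \<Longrightarrow> x \<in> X \<Longrightarrow> \<bar>g c x\<bar> \<le> M"
    and d_nonneg: "\<And>x y. 0 \<le> d x y"
    and equi: "\<And>e. 0 < e \<Longrightarrow> \<exists>\<delta>>0. \<forall>c\<in>A. \<forall>x\<in>X. \<forall>y\<in>X. d x y < \<delta> \<longrightarrow> \<bar>g c x - g c y\<bar> \<le> e"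
  shows "\<exists>\<eta>. modulus_of_continuity \<eta> \<and> (\<forall>c\<in>A. \<forall>x\<in>X. \<forall>y\<in>X. \<bar>g c x - g c y\<bar> \<le> \<eta> (d x y))"
proof -
  obtain \<delta> where \<delta>0: "\<And>k. 0 < \<delta> k" and \<delta>: "\<And>k c x y. c \<in> A \<Longrightarrow> x \<in> X \<Longrightarrow> y \<in> X \<Longrightarrow> d x y < \<delta> k \<Longrightarrow>
      \<bar>g c x - g c y\<bar> \<le> inverse (real (Suc k))"
    using equi[of "inverse (real (Suc _))"] by (metis inverse_positive_iff_positive of_nat_0_less_iff zero_less_Suc)
  define M' where "M' = max M 0"
  define b where "b k = (2 * M' + 1) / \<delta> k" for k
  interpret affine_family "\<lambda>k. inverse (real (Suc k))" b
  proof
    show "0 \<le> b k" for k using \<delta>0[of k] by (simp add: b_def M'_def)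
  qed (use LIMSEQ_inverse_real_of_nat in auto)
  have "\<bar>g c x - g c y\<bar> \<le> \<eta> (d x y)" if "c \<in> A" "x \<in> X" "y \<in> X" for c x y
    unfolding \<eta>_def
  proof (rule cINF_greatest)
    fix k
    show "\<bar>g c x - g c y\<bar> \<le> inverse (real (Suc k)) + b k * d x y"
    proof (cases "d x y < \<delta> k")
      case True
      then show ?thesis using \<delta>[OF that] b_nonneg[of k] d_nonneg[of x y] by (smt (verit) mult_nonneg_nonneg)
    next
      case False
      have "\<bar>g c x - g c y\<bar> \<le> 2 * M'"
        using bounded[OF that(1,2)] bounded[OF that(1,3)] by (simp add: M'_def abs_le_iff)
      also have "\<dots> < b k * \<delta> k" using \<delta>0[of k] by (simp add: b_def)
      also have "\<dots> \<le> b k * d x y" using False b_nonneg[of k] by (intro mult_left_mono) auto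
      finally show ?thesis by (smt (verit) inverse_nonnegative_iff_nonnegative of_nat_0_le_iff)
    qed
  qed simp
  then show ?thesis using modulus_of_continuity_\<eta> by blast
qed


section \<open>Reduction to the canonical control space\<close>

definition canon_param :: "('u \<Rightarrow> 'i::finite \<Rightarrow> 'i \<Rightarrow> real) \<Rightarrow> ('i \<Rightarrow> 'u \<Rightarrow> real) \<Rightarrow> 'u \<Rightarrow> (real^'i^'i) \<times> (real^'i)" where
  "canon_param lam f u = ((\<chi> i j. lam u i j), (\<chi> i. f i u))"

lemma canon_lam_canon_param [simp]: "canon_lam (canon_param lam f u) = lam u"
  by (simp add: fun_eq_iff canon_lam_def canon_param_def)

lemma canon_f_canon_param [simp]: "canon_f i (canon_param lam f u) = f i u"
  by (simp add: canon_f_def canon_param_def)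

lemma continuous_on_canon_param:
  assumes "\<And>i j. continuous_on U (\<lambda>u. lam u i j)" "\<And>i. continuous_on U (f i)"
  shows "continuous_on U (canon_param lam f)"
  unfolding canon_param_def by (intro continuous_on_Pair continuous_on_vec_lambda assms)

lemma phi_cong:
  assumes "\<And>s i j. 0 \<le> s \<Longrightarrow> lam (\<alpha> s) i j = lam' (\<alpha>' s) i j"
  shows "phi lam h a \<alpha> \<rho> = phi lam' h a \<alpha>' \<rho>"
proof -
  have "Fvf lam h a p (\<alpha> s) = Fvf lam' h a p (\<alpha>' s)" if "0 \<le> s" for p s
    unfolding Fvf_def muLam_def muLam1_def by (simp only: assms[OF that])
  then have "((\<lambda>s. Fvf lam h a (z s) (\<alpha> s)) has_integral x) {0..t} \<longleftrightarrow>
      ((\<lambda>s. Fvf lam' h a (z s) (\<alpha>' s)) has_integral x) {0..t}" for z x t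
    by (intro has_integral_cong) simp
  then show ?thesis unfolding phi_def by simp
qed

lemma JJ_cong:
  assumes "\<And>s i j. 0 \<le> s \<Longrightarrow> lam (\<alpha> s) i j = lam' (\<alpha>' s) i j" and "\<And>s i. 0 \<le> s \<Longrightarrow> f i (\<alpha> s) = f' i (\<alpha>' s)"
  shows "JJ lam f h nu0 qd \<beta> T w a \<nu> \<alpha> = JJ lam' f' h nu0 qd \<beta> T w a \<nu> \<alpha>'"
proof -
  have rr: "rr lam h a p (\<alpha> s) = rr lam' h a p (\<alpha>' s)" if "0 \<le> s" for p s
    unfolding rr_def muLam1_def by (simp only: assms(1)[OF that])
  have phi: "phi lam h a \<alpha> \<nu> = phi lam' h a \<alpha>' \<nu>" by (rule phi_cong) (rule assms(1))
  have chi: "chi lam h a \<alpha> \<nu> t = chi lam' h a \<alpha>' \<nu> t" for t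
    unfolding chi_def phi by (rule arg_cong[where f="\<lambda>x. exp (- x)"], rule integral_cong) (simp add: rr)
  show ?thesis unfolding JJ_def phi chi
  proof (rule integral_cong)
    fix t assume "t \<in> {0..T}"
    then have t: "0 \<le> t" by simp
    show "exp (- \<beta> * t) * LL lam f h nu0 qd a (phi lam' h a \<alpha>' \<nu> t) (chi lam' h a \<alpha>' \<nu> t) (\<alpha> t) w =
        exp (- \<beta> * t) * LL lam' f' h nu0 qd a (phi lam' h a \<alpha>' \<nu> t) (chi lam' h a \<alpha>' \<nu> t) (\<alpha>' t) w"
      unfolding LL_def rr_def intR_def qq_def muLam_def muLam1_def by (simp only: assms(1)[OF t] assms(2)[OF t])
  qed
qed

lemma JJ_eq_JJ_canon:
  "JJ lam f h nu0 qd \<beta> T w a \<nu> \<alpha> =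
     JJ canon_lam canon_f h nu0 qd \<beta> T w a \<nu> (\<lambda>s. canon_param lam f (\<alpha> (max s 0)))"
  by (rule JJ_cong) simp_all

lemma canon_control_measurable:
  assumes "\<alpha> \<in> Adm U" and "continuous_on U (canon_param lam f)"
  shows "(\<lambda>s. canon_param lam f (\<alpha> (max s 0))) \<in> borel_measurable lebesgue"
proof -
  have "\<alpha> \<in> restrict_space borel {0..} \<rightarrow>\<^sub>M borel"
    using assms(1) measurable_cong_sets[OF sets_restrict_space_cong[OF sets_lborel, of "{0::real..}"] refl, of borel]
    unfolding Adm_def by blast
  moreover have "(\<lambda>s::real. max s 0) \<in> borel \<rightarrow>\<^sub>M restrict_space borel {0..}"
    by (rule measurable_restrict_space2) (auto intro: borel_measurable_continuous_onI continuous_intros)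
  ultimately have "(\<lambda>s. \<alpha> (max s 0)) \<in> borel_measurable borel"
    using measurable_comp by (simp add: o_def)
  then have "(\<lambda>s. \<alpha> (max s 0)) \<in> borel_measurable lebesgue"
    by (rule borel_measurable_lebesgue_if_borel)
  then show ?thesis
    by (rule borel_measurable_continuous_on_comp[OF assms(2), rotated]) (use assms(1) in \<open>auto simp: Adm_def\<close>)
qed

lemma running_cost_canon_param:
  assumes "compact U" "\<And>u i j. u \<in> U \<Longrightarrow> i \<noteq> j \<Longrightarrow> 0 \<le> lam u i j"
    "\<And>u i. u \<in> U \<Longrightarrow> (\<Sum>j\<in>UNIV. lam u i j) = 0" "continuous_on U (canon_param lam f)"
    "continuous_on (Delta_e h) w" "\<And>b. nu0 b \<in> Delta h b"
  obtains Lm where "running_cost h (canon_param lam f ` U) w nu0 Lm"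
proof -
  have cUE: "compact (canon_param lam f ` U)" by (rule compact_continuous_image[OF assms(4,1)])
  obtain L where L: "\<forall>u\<in>canon_param lam f ` U. norm u \<le> L"
    using compact_imp_bounded[OF cUE] unfolding bounded_iff by blast
  have "running_cost h (canon_param lam f ` U) w nu0 (max L 0)"
  proof
    show "rate_matrix (canon_lam u)" if "u \<in> canon_param lam f ` U" for u
      using that assms(2,3) by (auto simp: rate_matrix_def)
    show "\<bar>canon_lam u i j\<bar> \<le> max L 0" if "u \<in> canon_param lam f ` U" for u i j
    proof -
      have "\<bar>canon_lam u i j\<bar> \<le> norm (fst u $ i)" unfolding canon_lam_def by (rule component_le_norm_cart)
      also have "\<dots> \<le> norm u"
        using Finite_Cartesian_Product.norm_nth_le[of "fst u" i] norm_fst_le[of "fst u" "snd u"] by simp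
      also have "\<dots> \<le> L" using L that by blast
      finally show ?thesis by simp
    qed
  qed (use cUE assms(5,6) in auto)
  then show ?thesis by (rule that)
qed

context running_cost
begin

lemma canon_control_in_controls:
  assumes "UE = canon_param lam f ` U" "continuous_on U (canon_param lam f)" "\<alpha> \<in> Adm U"
  shows "(\<lambda>s. canon_param lam f (\<alpha> (max s 0))) \<in> controls"
  unfolding controls_def using canon_control_measurable[OF assms(3,2)] assms(3) by (auto simp: Adm_def assms(1))

lemma JJ_Adm_bounded:
  assumes "UE = canon_param lam f ` U" "continuous_on U (canon_param lam f)" "0 \<le> \<beta>" "0 \<le> T"
  obtains M where "\<And>\<alpha> x. \<alpha> \<in> Adm U \<Longrightarrow> x \<in> Sigma UNIV (Delta h) \<Longrightarrow>
    \<bar>JJ lam f h nu0 qd \<beta> T w (fst x) (snd x) \<alpha>\<bar> \<le> M"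
proof -
  obtain M where "\<And>B a \<nu>. B \<in> controls \<Longrightarrow> \<nu> \<in> Delta h a \<Longrightarrow> \<bar>JJ canon_lam canon_f h nu0 qd \<beta> T w a \<nu> B\<bar> \<le> M"
    using JJ_bounded[OF assms(3,4), of qd] by blast
  then show ?thesis
    using canon_control_in_controls[OF assms(1,2)] by (intro that[of M]) (auto simp: JJ_eq_JJ_canon[of lam f])
qed

lemma JJ_Adm_uniformly_equicontinuous:
  assumes "UE = canon_param lam f ` U" "continuous_on U (canon_param lam f)" "0 \<le> \<beta>" "0 \<le> T" "0 < e"
  shows "\<exists>\<delta>>0. \<forall>\<alpha>\<in>Adm U. \<forall>x\<in>Sigma UNIV (Delta h). \<forall>y\<in>Sigma UNIV (Delta h). norm (snd x - snd y) < \<delta> \<longrightarrow>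
    \<bar>JJ lam f h nu0 qd \<beta> T w (fst x) (snd x) \<alpha> - JJ lam f h nu0 qd \<beta> T w (fst y) (snd y) \<alpha>\<bar> \<le> e"
proof -
  obtain \<delta> where "0 < \<delta>" and \<delta>: "\<forall>B\<in>controls. \<forall>a b \<nu> \<rho>. \<nu> \<in> Delta h a \<longrightarrow> \<rho> \<in> Delta h b \<longrightarrow>
      norm (\<nu> - \<rho>) < \<delta> \<longrightarrow> \<bar>JJ canon_lam canon_f h nu0 qd \<beta> T w a \<nu> B - JJ canon_lam canon_f h nu0 qd \<beta> T w b \<rho> B\<bar> \<le> e"
    using JJ_uniformly_equicontinuous[OF assms(3-5), of qd] by blast
  then show ?thesis
    using canon_control_in_controls[OF assms(1,2)] by (intro exI[of _ \<delta>]) (auto simp: JJ_eq_JJ_canon[of lam f])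
qed

end

theorem mainTheorem10:
  fixes lam :: "'u::metric_space \<Rightarrow> 'i::finite \<Rightarrow> 'i \<Rightarrow> real"
    and f :: "'i \<Rightarrow> 'u \<Rightarrow> real"
    and h :: "'i \<Rightarrow> 'o::finite"
    and U :: "'u set"
    and nu0 :: "'o \<Rightarrow> real^'i"
    and qd :: "'o \<Rightarrow> 'o \<Rightarrow> real"
    and \<beta> T :: real
    and w :: "real^'i \<Rightarrow> real"
  assumes h_surj: "surj h"
    and h_nonconst: "\<exists>i j. h i \<noteq> h j"
    and U_compact: "compact U"
    and lam_nonneg: "\<And>u i j. u \<in> U \<Longrightarrow> i \<noteq> j \<Longrightarrow> 0 \<le> lam u i j"
    and lam_rows: "\<And>u i. u \<in> U \<Longrightarrow> (\<Sum>j\<in>UNIV. lam u i j) = 0"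
    and nu0_in: "\<And>b. nu0 b \<in> Delta h b"
    and qd_nonneg: "\<And>a b. 0 \<le> qd a b"
    and qd_diag: "\<And>a. qd a a = 0"
    and qd_sum: "\<And>a. (\<Sum>b\<in>UNIV. qd a b) = 1"
    and beta_pos: "\<beta> > 0"
    and lam_cont: "\<And>i j. continuous_on U (\<lambda>u. lam u i j)"
    and f_cont: "\<And>i. continuous_on U (f i)"
    and T_pos: "T > 0"
    and w_cont: "continuous_on (Delta_e h) w"
  shows "\<exists>C K1 K2 \<eta>. C > 0 \<and> K1 > 0 \<and> K2 > 0 \<and> modulus_of_continuity \<eta> \<and>
    (\<forall>\<alpha>\<in>Adm U. \<forall>a b \<nu> \<rho>. \<nu> \<in> Delta h a \<longrightarrow> \<rho> \<in> Delta h b \<longrightarrow>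
       \<bar>JJ lam f h nu0 qd \<beta> T w a \<nu> \<alpha> - JJ lam f h nu0 qd \<beta> T w b \<rho> \<alpha>\<bar>
         \<le> K1 * norm (\<nu> - \<rho>) + K2 * \<eta> (C * norm (\<nu> - \<rho>)))"
proof -
  txt \<open>The modulus obtained bounds the
    difference by itself, so \<open>C = K1 = K2 = 1\<close>.\<close>
  define g where "g \<alpha> x = JJ lam f h nu0 qd \<beta> T w (fst x) (snd x) \<alpha>" for \<alpha> x
  define d where "d x y = norm (snd x - snd y)" for x y :: "'o \<times> (real^'i)"
  have Ec: "continuous_on U (canon_param lam f)" by (rule continuous_on_canon_param[OF lam_cont f_cont])
  obtain Lm where "running_cost h (canon_param lam f ` U) w nu0 Lm"
    by (rule running_cost_canon_param[OF U_compact lam_nonneg lam_rows Ec w_cont nu0_in])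
  then interpret running_cost h "canon_param lam f ` U" w nu0 Lm .
  obtain M where "\<And>\<alpha> x. \<alpha> \<in> Adm U \<Longrightarrow> x \<in> Sigma UNIV (Delta h) \<Longrightarrow> \<bar>g \<alpha> x\<bar> \<le> M"
    unfolding g_def using JJ_Adm_bounded[OF refl Ec] beta_pos T_pos by (meson less_imp_le)
  moreover have "\<exists>\<delta>>0. \<forall>\<alpha>\<in>Adm U. \<forall>x\<in>Sigma UNIV (Delta h). \<forall>y\<in>Sigma UNIV (Delta h).
      d x y < \<delta> \<longrightarrow> \<bar>g \<alpha> x - g \<alpha> y\<bar> \<le> e" if "0 < e" for e
    unfolding g_def d_def using JJ_Adm_uniformly_equicontinuous[OF refl Ec _ _ that] beta_pos T_pos by simp
  ultimately obtain \<eta> where "modulus_of_continuity \<eta>"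
    and \<eta>: "\<forall>\<alpha>\<in>Adm U. \<forall>x\<in>Sigma UNIV (Delta h). \<forall>y\<in>Sigma UNIV (Delta h). \<bar>g \<alpha> x - g \<alpha> y\<bar> \<le> \<eta> (d x y)"
    using modulus_of_continuity_if_uniformly_equicontinuous[of "Adm U" "Sigma UNIV (Delta h)" g M d]
    by (auto simp: d_def)
  have "\<bar>JJ lam f h nu0 qd \<beta> T w a \<nu> \<alpha> - JJ lam f h nu0 qd \<beta> T w b \<rho> \<alpha>\<bar> \<le> 1 * norm (\<nu> - \<rho>) + 1 * \<eta> (1 * norm (\<nu> - \<rho>))"
    if "\<alpha> \<in> Adm U" "\<nu> \<in> Delta h a" "\<rho> \<in> Delta h b" for \<alpha> a b \<nu> \<rho>
  proof -
    have "\<bar>g \<alpha> (a, \<nu>) - g \<alpha> (b, \<rho>)\<bar> \<le> \<eta> (d (a, \<nu>) (b, \<rho>))" using \<eta> that by blast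
    then show ?thesis by (simp add: g_def d_def add_increasing)
  qed
  then show ?thesis using \<open>modulus_of_continuity \<eta>\<close> by (intro exI[of _ 1] exI[of _ \<eta>]) auto
qed

end
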